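(* Let $X$ be a compact nonpositively curved cube complex and $(\tilde Y,\phi)$ a quasiline in $\tilde X$. Then for each hyperplane $H$ of $\tilde Y$: (1) $H$ is trivial if and only if $\operatorname{diam}(H)=\infty$; (2) $H$ is half-essential if and only if it has a compact halfspace; (3) $H$ is essential if and only if $\operatorname{diam}(H)<\infty$ and both halfspaces of $H$ are noncompact.
   Context: $\tilde X$ is the universal cover of $X$. A quasiline in $\tilde X$ is a pair $(\tilde Y,\phi)$ with $\tilde Y\subset\tilde X$ a convex subcomplex and $\phi\in\pi_1X$ nontrivial such that $\langle\phi\rangle$ acts cocompactly on $\tilde Y$. Hyperplanes of $\tilde Y$ and their two halfspaces (components of the complement of the open carrier) are taken in the CAT(0) cube complex $\tilde Y$. A halfspace of $H$ is deep if it contains points arbitrarily far from $H$, shallow otherwise. $H$ is essential if both halfspaces are deep, trivial if both are shallow, half-essential if exactly one is deep. *)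

theory Defs
  imports "HOL-Algebra.Group" "HOL-Library.Extended_Nat"
begin

text \<open>CAT(0) cube complexes are modelled by their 1-skeleta (median graphs).
  A graph is a vertex set V with an adjacency relation E.\<close>

definition is_graph :: "'v set \<Rightarrow> ('v \<Rightarrow> 'v \<Rightarrow> bool) \<Rightarrow> bool" where
  "is_graph V E \<longleftrightarrow> (\<forall>x y. E x y \<longrightarrow> x \<in> V \<and> y \<in> V \<and> E y x \<and> x \<noteq> y)"

definition is_path :: "'v set \<Rightarrow> ('v \<Rightarrow> 'v \<Rightarrow> bool) \<Rightarrow> 'v list \<Rightarrow> bool" where
  "is_path V E xs \<longleftrightarrow> xs \<noteq> [] \<and> set xs \<subseteq> V \<and>
     (\<forall>i. Suc i < length xs \<longrightarrow> E (xs ! i) (xs ! Suc i))"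

definition connected_graph :: "'v set \<Rightarrow> ('v \<Rightarrow> 'v \<Rightarrow> bool) \<Rightarrow> bool" where
  "connected_graph V E \<longleftrightarrow>
     (\<forall>x\<in>V. \<forall>y\<in>V. \<exists>xs. is_path V E xs \<and> hd xs = x \<and> last xs = y)"

definition gdist :: "'v set \<Rightarrow> ('v \<Rightarrow> 'v \<Rightarrow> bool) \<Rightarrow> 'v \<Rightarrow> 'v \<Rightarrow> nat" where
  "gdist V E x y = (LEAST n. \<exists>xs. is_path V E xs \<and> hd xs = x \<and> last xs = y \<and> length xs = Suc n)"

definition interval :: "'v set \<Rightarrow> ('v \<Rightarrow> 'v \<Rightarrow> bool) \<Rightarrow> 'v \<Rightarrow> 'v \<Rightarrow> 'v set" where
  "interval V E x y = {w\<in>V. gdist V E x w + gdist V E w y = gdist V E x y}"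

definition median_graph :: "'v set \<Rightarrow> ('v \<Rightarrow> 'v \<Rightarrow> bool) \<Rightarrow> bool" where
  "median_graph V E \<longleftrightarrow> is_graph V E \<and> connected_graph V E \<and>
     (\<forall>x\<in>V. \<forall>y\<in>V. \<forall>z\<in>V. \<exists>!m. m \<in> interval V E x y \<inter> interval V E y z \<inter> interval V E x z)"

definition is_cube :: "'v set \<Rightarrow> ('v \<Rightarrow> 'v \<Rightarrow> bool) \<Rightarrow> 'v set \<Rightarrow> bool" where
  "is_cube V E S \<longleftrightarrow> S \<subseteq> V \<and> (\<exists>(n::nat) (f::'v \<Rightarrow> nat set). bij_betw f S (Pow {..<n}) \<and>
     (\<forall>a\<in>S. \<forall>b\<in>S. E a b \<longleftrightarrow> card ((f a - f b) \<union> (f b - f a)) = 1))"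

text \<open>Convex subcomplex (given by its vertex set; the subcomplex is the full one on it).\<close>
definition convex_subcomplex :: "'v set \<Rightarrow> ('v \<Rightarrow> 'v \<Rightarrow> bool) \<Rightarrow> 'v set \<Rightarrow> bool" where
  "convex_subcomplex V E Y \<longleftrightarrow> Y \<subseteq> V \<and> (\<forall>x\<in>Y. \<forall>y\<in>Y. interval V E x y \<subseteq> Y)"

definition cubical_action ::
  "('g, 'b) monoid_scheme \<Rightarrow> 'v set \<Rightarrow> ('v \<Rightarrow> 'v \<Rightarrow> bool) \<Rightarrow> ('g \<Rightarrow> 'v \<Rightarrow> 'v) \<Rightarrow> bool" where
  "cubical_action G V E act \<longleftrightarrow> group G \<and>
     (\<forall>g\<in>carrier G. bij_betw (act g) V V \<and> (\<forall>x\<in>V. \<forall>y\<in>V. E x y \<longleftrightarrow> E (act g x) (act g y))) \<and>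
     (\<forall>x\<in>V. act \<one>\<^bsub>G\<^esub> x = x) \<and>
     (\<forall>g\<in>carrier G. \<forall>h\<in>carrier G. \<forall>x\<in>V. act (g \<otimes>\<^bsub>G\<^esub> h) x = act g (act h x))"

text \<open>Free action on the cube complex: no nontrivial element stabilises a cube
  (equivalently, fixes a point).\<close>
definition free_action ::
  "('g, 'b) monoid_scheme \<Rightarrow> 'v set \<Rightarrow> ('v \<Rightarrow> 'v \<Rightarrow> bool) \<Rightarrow> ('g \<Rightarrow> 'v \<Rightarrow> 'v) \<Rightarrow> bool" where
  "free_action G V E act \<longleftrightarrow>
     (\<forall>g\<in>carrier G. \<forall>S. is_cube V E S \<and> act g ` S = S \<longrightarrow> g = \<one>\<^bsub>G\<^esub>)"

text \<open>Cocompact action of a set of group elements: finitely many orbits of cubes.\<close>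
definition cocompact_on ::
  "'g set \<Rightarrow> 'v set \<Rightarrow> ('v \<Rightarrow> 'v \<Rightarrow> bool) \<Rightarrow> ('g \<Rightarrow> 'v \<Rightarrow> 'v) \<Rightarrow> bool" where
  "cocompact_on K V E act \<longleftrightarrow> finite {{act g ` S | g. g \<in> K} | S. is_cube V E S}"

text \<open>Universal cover of a compact nonpositively curved cube complex X:
  a CAT(0) cube complex (median graph V, E) with pi_1 X = G acting freely and cocompactly.\<close>
definition universal_cover_of_compact_npc ::
  "('g, 'b) monoid_scheme \<Rightarrow> 'v set \<Rightarrow> ('v \<Rightarrow> 'v \<Rightarrow> bool) \<Rightarrow> ('g \<Rightarrow> 'v \<Rightarrow> 'v) \<Rightarrow> bool" where
  "universal_cover_of_compact_npc G V E act \<longleftrightarrow>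
     median_graph V E \<and> cubical_action G V E act \<and> free_action G V E act \<and>
     cocompact_on (carrier G) V E act"

definition cyclic_subgroup :: "('g, 'b) monoid_scheme \<Rightarrow> 'g \<Rightarrow> 'g set" where
  "cyclic_subgroup G \<phi> = {\<phi> [^]\<^bsub>G\<^esub> (n::int) | n. True}"

definition quasiline ::
  "('g, 'b) monoid_scheme \<Rightarrow> 'v set \<Rightarrow> ('v \<Rightarrow> 'v \<Rightarrow> bool) \<Rightarrow> ('g \<Rightarrow> 'v \<Rightarrow> 'v) \<Rightarrow> 'v set \<Rightarrow> 'g \<Rightarrow> bool" where
  "quasiline G V E act Y \<phi> \<longleftrightarrow>
     convex_subcomplex V E Y \<and> \<phi> \<in> carrier G \<and> \<phi> \<noteq> \<one>\<^bsub>G\<^esub> \<and>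
     (\<forall>g\<in>cyclic_subgroup G \<phi>. act g ` Y = Y) \<and>
     cocompact_on (cyclic_subgroup G \<phi>) Y E act"

text \<open>Hyperplanes of the cube complex with 1-skeleton (Y, E restricted to Y):
  classes of edges under the transitive closure of "opposite sides of a square".\<close>
definition edges :: "'v set \<Rightarrow> ('v \<Rightarrow> 'v \<Rightarrow> bool) \<Rightarrow> 'v set set" where
  "edges Y E = {{a, b} | a b. a \<in> Y \<and> b \<in> Y \<and> E a b}"

definition elem_parallel :: "'v set \<Rightarrow> ('v \<Rightarrow> 'v \<Rightarrow> bool) \<Rightarrow> 'v set \<Rightarrow> 'v set \<Rightarrow> bool" where
  "elem_parallel Y E e e' \<longleftrightarrow> (\<exists>a b c d. e = {a, b} \<and> e' = {c, d} \<and> {a, b, c, d} \<subseteq> Y \<and>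
      E a b \<and> E c d \<and> E a c \<and> E b d \<and> e \<inter> e' = {})"

definition hyperplanes :: "'v set \<Rightarrow> ('v \<Rightarrow> 'v \<Rightarrow> bool) \<Rightarrow> 'v set set set" where
  "hyperplanes Y E = {{e'. (elem_parallel Y E)\<^sup>*\<^sup>* e e'} | e. e \<in> edges Y E}"

text \<open>Vertices of the carrier of H (endpoints of edges dual to H).\<close>
definition carrier_vertices :: "'v set set \<Rightarrow> 'v set" where
  "carrier_vertices H = \<Union>H"

text \<open>Halfspaces of H: components of the complement of the open carrier, i.e. (full
  subcomplexes on) the components of the 1-skeleton with the edges dual to H removed.\<close>
definition halfspaces :: "'v set \<Rightarrow> ('v \<Rightarrow> 'v \<Rightarrow> bool) \<Rightarrow> 'v set set \<Rightarrow> 'v set set" where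
  "halfspaces Y E H =
     {{y\<in>Y. \<exists>xs. is_path Y (\<lambda>a b. E a b \<and> {a, b} \<notin> H) xs \<and> hd xs = x \<and> last xs = y} | x. x \<in> Y}"

definition deep :: "'v set \<Rightarrow> ('v \<Rightarrow> 'v \<Rightarrow> bool) \<Rightarrow> 'v set set \<Rightarrow> 'v set \<Rightarrow> bool" where
  "deep Y E H h \<longleftrightarrow> (\<forall>n::nat. \<exists>x\<in>h. \<forall>y\<in>carrier_vertices H. gdist Y E x y \<ge> n)"

definition essential :: "'v set \<Rightarrow> ('v \<Rightarrow> 'v \<Rightarrow> bool) \<Rightarrow> 'v set set \<Rightarrow> bool" where
  "essential Y E H \<longleftrightarrow> (\<forall>h\<in>halfspaces Y E H. deep Y E H h)"

definition trivial_hyp :: "'v set \<Rightarrow> ('v \<Rightarrow> 'v \<Rightarrow> bool) \<Rightarrow> 'v set set \<Rightarrow> bool" where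
  "trivial_hyp Y E H \<longleftrightarrow> (\<forall>h\<in>halfspaces Y E H. \<not> deep Y E H h)"

definition half_essential :: "'v set \<Rightarrow> ('v \<Rightarrow> 'v \<Rightarrow> bool) \<Rightarrow> 'v set set \<Rightarrow> bool" where
  "half_essential Y E H \<longleftrightarrow>
     (\<exists>h\<in>halfspaces Y E H. deep Y E H h) \<and> (\<exists>h\<in>halfspaces Y E H. \<not> deep Y E H h)"

definition hyp_diam :: "'v set \<Rightarrow> ('v \<Rightarrow> 'v \<Rightarrow> bool) \<Rightarrow> 'v set set \<Rightarrow> enat" where
  "hyp_diam Y E H = (SUP x\<in>carrier_vertices H. SUP y\<in>carrier_vertices H. enat (gdist Y E x y))"

text \<open>A subcomplex (full on a vertex set) is compact iff it has finitely many vertices.\<close>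
definition compact_subcomplex :: "'v set \<Rightarrow> bool" where
  "compact_subcomplex h \<longleftrightarrow> finite h"

end

theory Submission
  imports Defs "HOL-Algebra.Multiplicative_Group"
begin

text \<open>The hyperplane dual to
  an edge \<open>uv\<close> consists of the edges crossing the Djokovic--Winkler side \<open>W\<^sub>u\<^sub>v\<close>, so
  its two halfspaces are \<open>W\<^sub>u\<^sub>v\<close> and \<open>W\<^sub>v\<^sub>u\<close>. In a finite median graph an invariant
  set of odd size has a fixed majority centre, and an involution stabilises the interval
  between a point of minimal displacement and its image, which is a cube; both arguments
  rest on the Helly property of convex sets. As the action is free, a finite order of
  \<open>\<phi>\<close> would therefore be both odd and even, so \<open>\<phi>\<close> has infinite order, and \<open>Y\<close> is
  infinite and, by cocompactness, locally finite.

  If the carrier of \<open>H\<close> is finite, \<open>H\<close> has finite diameter and a halfspace is deep iff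
  it is infinite; at least one is, because \<open>Y\<close> is infinite. If the carrier is infinite,
  the diameter is infinite by local finiteness, and cocompactness puts two edges of \<open>H\<close>
  in one orbit, so a nonzero power of \<open>\<phi>\<close> fixes both halfspaces. Its orbits make both
  halfspaces infinite, while every vertex stays within bounded distance of the carrier,
  so neither halfspace is deep.\<close>

section \<open>Paths and the path metric\<close>

lemma is_path_Cons:
  "is_path V E (x # xs) \<longleftrightarrow> x \<in> V \<and> (xs = [] \<or> E x (hd xs) \<and> is_path V E xs)"
proof (cases xs)
  case (Cons y ys)
  have "(\<forall>i. Suc i < length (x # xs) \<longrightarrow> E ((x # xs) ! i) ((x # xs) ! Suc i)) \<longleftrightarrow>
        E x y \<and> (\<forall>i. Suc i < length xs \<longrightarrow> E (xs ! i) (xs ! Suc i))"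
    using Cons by (auto simp: less_Suc_eq_0_disj nth_Cons split: nat.splits)
  then show ?thesis using Cons by (auto simp: is_path_def)
qed (auto simp: is_path_def)

lemma is_path_singleton [simp]: "is_path V E [x] \<longleftrightarrow> x \<in> V"
  by (simp add: is_path_Cons)

lemma is_path_append:
  assumes "is_path V E xs" "is_path V E ys" "last xs = hd ys"
  shows "is_path V E (xs @ tl ys)"
  using assms
proof (induction xs)
  case (Cons x xs)
  show ?case
  proof (cases xs)
    case Nil
    then show ?thesis using Cons.prems by (cases ys) auto
  next
    case (Cons z zs)
    then show ?thesis using Cons.IH Cons.prems by (auto simp: is_path_Cons)
  qed
qed (simp add: is_path_def)

lemma is_path_map:
  assumes "is_path V E xs" "\<And>x. x \<in> V \<Longrightarrow> f x \<in> V'"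
    and "\<And>x y. x \<in> V \<Longrightarrow> y \<in> V \<Longrightarrow> E x y \<Longrightarrow> E' (f x) (f y)"
  shows "is_path V' E' (map f xs)"
  using assms unfolding is_path_def by (auto simp: subset_iff)

lemma is_path_subset: "\<lbrakk>is_path V E xs; V \<subseteq> V'\<rbrakk> \<Longrightarrow> is_path V' E xs"
  by (auto simp: is_path_def)

lemma is_path_rev:
  assumes "is_path V E xs" "\<And>x y. x \<in> V \<Longrightarrow> y \<in> V \<Longrightarrow> E x y \<Longrightarrow> E y x"
  shows "is_path V E (rev xs)"
  using assms(1)
proof (induction xs)
  case (Cons x xs)
  show ?case
  proof (cases xs)
    case Nil
    then show ?thesis using Cons.prems by simp
  next
    case (Cons y ys)
    then have p: "is_path V E xs" "x \<in> V" "E x y"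
      using Cons.prems by (auto simp: is_path_Cons)
    then have "y \<in> V" using \<open>xs = y # ys\<close> by (simp add: is_path_def)
    then have "is_path V E [y, x]" using p assms(2) by (simp add: is_path_Cons)
    moreover have "is_path V E (rev xs)" using p(1) by (rule Cons.IH)
    ultimately have "is_path V E (rev xs @ tl [y, x])"
      using \<open>xs = y # ys\<close> by (intro is_path_append) (auto simp: last_rev)
    then show ?thesis by simp
  qed
qed (simp add: is_path_def)

lemma is_path_invariant:
  assumes "is_path V E xs" "P (hd xs)" "\<And>a b. a \<in> V \<Longrightarrow> b \<in> V \<Longrightarrow> E a b \<Longrightarrow> P a \<Longrightarrow> P b"
  shows "P (last xs)"
  using assms(1,2)
proof (induction xs)
  case (Cons x xs)
  show ?case
  proof (cases xs)
    case (Cons y ys)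
    then have "is_path V E xs" "x \<in> V" "E x y" using Cons.prems by (auto simp: is_path_Cons)
    moreover from this have "y \<in> V" using Cons by (simp add: is_path_def)
    ultimately have "P (hd xs)" using Cons.prems assms(3) \<open>xs = y # ys\<close> by simp
    then show ?thesis using Cons.IH \<open>is_path V E xs\<close> \<open>xs = y # ys\<close> by simp
  qed (use Cons.prems in simp)
qed (simp add: is_path_def)

lemma gdist_le_length:
  assumes "is_path V E xs"
  shows "gdist V E (hd xs) (last xs) \<le> length xs - 1"
proof -
  have "\<exists>ys. is_path V E ys \<and> hd ys = hd xs \<and> last ys = last xs \<and> length ys = Suc (length xs - 1)"
    using assms by (intro exI[of _ xs]) (auto simp: is_path_def)
  then show ?thesis unfolding gdist_def by (rule Least_le)
qed

lemma geodesic_exists: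
  assumes "connected_graph V E" "x \<in> V" "y \<in> V"
  shows "\<exists>xs. is_path V E xs \<and> hd xs = x \<and> last xs = y \<and> length xs = Suc (gdist V E x y)"
proof -
  obtain xs where "is_path V E xs" "hd xs = x" "last xs = y"
    using assms unfolding connected_graph_def by blast
  then have "\<exists>n xs. is_path V E xs \<and> hd xs = x \<and> last xs = y \<and> length xs = Suc n"
    by (intro exI[of _ "length xs - 1"] exI[of _ xs]) (auto simp: is_path_def)
  then show ?thesis unfolding gdist_def by (rule LeastI_ex)
qed

section \<open>Median graphs\<close>

text \<open>The axioms only constrain \<open>E\<close> on \<open>V\<close>, so that a convex subset of a median graph,
  with the ambient adjacency relation, is again an instance.\<close>

locale median =
  fixes V :: "'v set" and E :: "'v \<Rightarrow> 'v \<Rightarrow> bool"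
  assumes edge_sym: "\<lbrakk>x \<in> V; y \<in> V; E x y\<rbrakk> \<Longrightarrow> E y x"
    and edge_irrefl: "x \<in> V \<Longrightarrow> \<not> E x x"
    and connected: "connected_graph V E"
    and median_unique: "\<lbrakk>x \<in> V; y \<in> V; z \<in> V\<rbrakk> \<Longrightarrow>
        \<exists>!m. m \<in> interval V E x y \<inter> interval V E y z \<inter> interval V E x z"

lemma median_graph_imp_median: "median_graph V E \<Longrightarrow> median V E"
  unfolding median_graph_def is_graph_def by unfold_locales auto

context median
begin

abbreviation "d \<equiv> gdist V E"
abbreviation "I \<equiv> interval V E"

lemma in_interval: "z \<in> I x y \<longleftrightarrow> z \<in> V \<and> d x z + d z y = d x y"
  by (simp add: interval_def)

lemma median_exists:
  assumes "x \<in> V" "y \<in> V" "z \<in> V"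
  obtains m where "m \<in> I x y" "m \<in> I y z" "m \<in> I x z"
  using median_unique[OF assms] by blast

lemma median_eq:
  assumes "x \<in> V" "y \<in> V" "z \<in> V"
    and "m \<in> I x y" "m \<in> I y z" "m \<in> I x z" "m' \<in> I x y" "m' \<in> I y z" "m' \<in> I x z"
  shows "m = m'"
  using median_unique[OF assms(1-3)] assms(4-) by blast

lemma geodesic:
  assumes "x \<in> V" "y \<in> V"
  obtains xs where "is_path V E xs" "hd xs = x" "last xs = y" "length xs = Suc (d x y)"
  using geodesic_exists[OF connected assms] by blast

lemma dist_self [simp]: "x \<in> V \<Longrightarrow> d x x = 0"
  using gdist_le_length[of V E "[x]"] by simp

lemma dist_eq_0_iff:
  assumes "x \<in> V" "y \<in> V"
  shows "d x y = 0 \<longleftrightarrow> x = y"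
proof
  assume "d x y = 0"
  obtain xs where "is_path V E xs" "hd xs = x" "last xs = y" "length xs = Suc (d x y)"
    using geodesic[OF assms] .
  then show "x = y" using \<open>d x y = 0\<close> by (cases xs) auto
qed (use assms in simp)

lemma dist_sym:
  assumes "x \<in> V" "y \<in> V"
  shows "d x y = d y x"
proof -
  have "d a b \<le> d b a" if ab: "a \<in> V" "b \<in> V" for a b
  proof -
    obtain xs where xs: "is_path V E xs" "hd xs = b" "last xs = a" "length xs = Suc (d b a)"
      using geodesic[OF ab(2,1)] .
    have "is_path V E (rev xs)" using xs(1) edge_sym by (rule is_path_rev)
    from gdist_le_length[OF this] xs show ?thesis by (cases xs) (auto simp: hd_rev last_rev)
  qed
  then show ?thesis using assms by (simp add: le_antisym)
qed

lemma dist_triangle: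
  assumes "x \<in> V" "y \<in> V" "z \<in> V"
  shows "d x z \<le> d x y + d y z"
proof -
  obtain xs where xs: "is_path V E xs" "hd xs = x" "last xs = y" "length xs = Suc (d x y)"
    using geodesic assms by blast
  obtain ys where ys: "is_path V E ys" "hd ys = y" "last ys = z" "length ys = Suc (d y z)"
    using geodesic assms by blast
  have "is_path V E (xs @ tl ys)" using xs ys by (intro is_path_append) auto
  from gdist_le_length[OF this] show ?thesis
    using xs ys by (cases xs; cases ys) auto
qed

lemma edge_iff_dist_1:
  assumes "x \<in> V" "y \<in> V"
  shows "E x y \<longleftrightarrow> d x y = 1"
proof
  assume "E x y"
  then have "is_path V E [x, y]" using assms by (simp add: is_path_Cons)
  from gdist_le_length[OF this] have "d x y \<le> 1" by simp
  moreover have "x \<noteq> y" using edge_irrefl assms \<open>E x y\<close> by auto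
  ultimately show "d x y = 1" using dist_eq_0_iff[OF assms] by linarith
next
  assume "d x y = 1"
  obtain xs where xs: "is_path V E xs" "hd xs = x" "last xs = y" "length xs = Suc (d x y)"
    using geodesic[OF assms] .
  then obtain a b where "xs = [a, b]" using \<open>d x y = 1\<close> by (cases xs; cases "tl xs") auto
  then show "E x y" using xs by (auto simp: is_path_Cons)
qed

lemma dist_edge: "\<lbrakk>x \<in> V; y \<in> V; E x y\<rbrakk> \<Longrightarrow> d x y = 1"
  using edge_iff_dist_1 by blast

lemma geodesic_step:
  assumes "x \<in> V" "y \<in> V" "x \<noteq> y"
  obtains x' where "x' \<in> V" "E x x'" "d x' y + 1 = d x y"
proof -
  obtain xs where xs: "is_path V E xs" "hd xs = x" "last xs = y" "length xs = Suc (d x y)"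
    using geodesic assms by blast
  then obtain z zs where zs: "xs = x # z # zs"
    using assms by (cases xs; cases "tl xs") (auto simp: dist_eq_0_iff)
  have z: "is_path V E (z # zs)" "E x z" "z \<in> V" using xs(1) zs by (auto simp: is_path_Cons)
  have "d z y + 1 \<le> d x y" using gdist_le_length[OF z(1)] xs zs by simp
  moreover have "d x y \<le> d x z + d z y" using dist_triangle assms z by blast
  moreover have "d x z = 1" using dist_edge assms z by blast
  ultimately show ?thesis using that z by simp
qed

lemma dist_edge_neq:
  assumes "w \<in> V" "x \<in> V" "y \<in> V" "E x y"
  shows "d w x \<noteq> d w y"
proof -
  obtain m where m: "m \<in> I w x" "m \<in> I x y" "m \<in> I w y"
    using median_exists[OF assms(1-3)] .
  have mV: "m \<in> V" and "d x m + d m y = 1" using m(2) dist_edge assms by (auto simp: in_interval)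
  then have "d x m = 0 \<or> d m y = 0" by linarith
  then have "m = x \<or> m = y" using dist_eq_0_iff mV assms by blast
  then show ?thesis
  proof
    assume "m = x"
    then show ?thesis using m(3) dist_edge assms by (auto simp: in_interval)
  next
    assume "m = y"
    then show ?thesis using m(1) dist_edge edge_sym dist_sym assms by (auto simp: in_interval)
  qed
qed

lemma dist_edge_cases:
  assumes "w \<in> V" "x \<in> V" "y \<in> V" "E x y"
  shows "d w y = d w x + 1 \<or> d w x = d w y + 1"
proof -
  have "d w y \<le> d w x + d x y" "d w x \<le> d w y + d y x"
    using dist_triangle assms by blast+
  moreover have "d x y = 1" "d y x = 1" using dist_edge edge_sym assms by blast+
  ultimately show ?thesis using dist_edge_neq[OF assms] by linarith
qed

lemma dist_common_neighbours:
  assumes "p \<in> V" "a \<in> V" "b \<in> V" "E p a" "E p b" "a \<noteq> b"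
  shows "d a b = 2"
proof -
  have "d a b \<le> d a p + d p b" using dist_triangle assms by blast
  moreover have "d a p = 1" "d p b = 1" using dist_edge assms edge_sym by blast+
  moreover have "d a b \<noteq> 0" using dist_eq_0_iff assms by auto
  moreover have "d a b \<noteq> 1"
  proof
    assume "d a b = 1"
    then have "E a b" using edge_iff_dist_1 assms(2,3) by blast
    then show False using dist_edge_neq[of p a b] dist_edge[of p] assms by simp
  qed
  ultimately show ?thesis by linarith
qed

end

section \<open>Sides of edges\<close>

context median
begin

definition side :: "'v \<Rightarrow> 'v \<Rightarrow> 'v set" where
  "side u v = {w \<in> V. d w u < d w v}"

lemma side_subset: "side u v \<subseteq> V"
  by (auto simp: side_def)

lemma self_in_side: "\<lbrakk>u \<in> V; v \<in> V; E u v\<rbrakk> \<Longrightarrow> u \<in> side u v"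
  using dist_edge by (auto simp: side_def)

lemma side_compl:
  assumes "u \<in> V" "v \<in> V" "E u v"
  shows "V - side u v = side v u"
  using dist_edge_neq[OF _ assms] by (auto simp: side_def nat_neq_iff)

lemma square_side_lt:
  assumes V: "a \<in> V" "b \<in> V" "c \<in> V" "e \<in> V" "w \<in> V"
    and sq: "E a b" "E c e" "E a c" "E b e" and ne: "a \<noteq> e" "b \<noteq> c"
    and lt: "d w a < d w b"
  shows "d w c < d w e"
proof (rule ccontr)
  assume "\<not> d w c < d w e"
  moreover have "d w b = d w a + 1 \<or> d w a = d w b + 1" "d w e = d w c + 1 \<or> d w c = d w e + 1"
    "d w c = d w a + 1 \<or> d w a = d w c + 1" "d w e = d w b + 1 \<or> d w b = d w e + 1"
    using dist_edge_cases V sq by blast+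
  ultimately have wb: "d w b = d w a + 1" and wc: "d w c = d w a + 1" and we: "d w e = d w a"
    using lt by linarith+
  text \<open>Then the median \<open>m\<close> of \<open>w\<close>, \<open>a\<close>, \<open>e\<close> is a common neighbour of \<open>a\<close> and \<open>e\<close>,
    and \<open>a\<close> and \<open>e\<close> are two distinct medians of \<open>b\<close>, \<open>c\<close>, \<open>m\<close>.\<close>
  obtain m where m: "m \<in> I w a" "m \<in> I a e" "m \<in> I w e" using median_exists[OF V(5,1,4)] .
  have mV: "m \<in> V" using m by (simp add: in_interval)
  have "d a e = 2" using dist_common_neighbours[of b a e] V sq edge_sym ne by auto
  then have ma: "d m a = 1" and me: "d m e = 1" and wm: "d w m + 1 = d w a"
    using m we dist_sym[OF mV V(1)] by (auto simp: in_interval)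
  then have "E a m" "E e m" using edge_iff_dist_1 mV V dist_sym by auto
  have "m \<noteq> b" "m \<noteq> c" using wm wb wc by auto
  then have "d b c = 2" "d c m = 2" "d b m = 2"
    using dist_common_neighbours[of a b c] dist_common_neighbours[of a c m]
      dist_common_neighbours[of a b m] V sq ne mV \<open>E a m\<close> by auto
  moreover have "d b a = 1" "d a c = 1" "d c a = 1" "d a m = 1" "d m a = 1"
    "d b e = 1" "d e c = 1" "d c e = 1" "d e m = 1" "d m e = 1"
    using dist_edge V sq edge_sym mV \<open>E a m\<close> \<open>E e m\<close> by blast+
  ultimately have "a \<in> I b c" "a \<in> I c m" "a \<in> I b m" "e \<in> I b c" "e \<in> I c m" "e \<in> I b m"
    using V mV by (simp_all add: in_interval)
  then have "a = e" using median_eq[of b c m a e] V mV by blast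
  then show False using ne by simp
qed

lemma square_sides_eq:
  assumes "a \<in> V" "b \<in> V" "c \<in> V" "e \<in> V"
    and "E a b" "E c e" "E a c" "E b e" "a \<noteq> e" "b \<noteq> c"
  shows "side a b = side c e"
proof -
  have "E c a" "E e b" using edge_sym assms by blast+
  have "w \<in> side c e" if "w \<in> side a b" for w
    using square_side_lt[of a b c e w] that assms by (simp add: side_def)
  moreover have "w \<in> side a b" if "w \<in> side c e" for w
    using square_side_lt[of c e a b w] that assms \<open>E c a\<close> \<open>E e b\<close> by (simp add: side_def)
  ultimately show ?thesis by blast
qed

text \<open>An edge \<open>xy\<close> crossing \<open>W\<^sub>u\<^sub>v\<close> with \<open>x \<noteq> u\<close> is the far side of a square whose
  near side crosses \<open>W\<^sub>u\<^sub>v\<close> and is closer to \<open>u\<close>; the square is spanned by a neighbour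
  \<open>x'\<close> of \<open>x\<close> towards \<open>u\<close> and the median of \<open>x'\<close>, \<open>y\<close> and \<open>v\<close>.\<close>

lemma crossing_edge_square:
  assumes uv: "u \<in> V" "v \<in> V" "E u v"
    and xy: "x \<in> V" "y \<in> V" "E x y" "x \<in> side u v" "y \<notin> side u v" and "x \<noteq> u"
  obtains x' m where "x' \<in> V" "m \<in> V" "E x' m" "E x' x" "E m y" "x' \<noteq> y" "m \<noteq> x"
    "x' \<in> side u v" "m \<notin> side u v" "d x' u < d x u"
proof -
  define k where "k = d x u"
  have xv: "d x v = k + 1"
    using xy(4) dist_edge_cases[OF xy(1) uv] unfolding k_def side_def by auto
  have "d y v < d y u" using xy(2,5) dist_edge_neq[OF xy(2) uv] by (auto simp: side_def)
  moreover have "d u y = d u x + 1 \<or> d u x = d u y + 1" "d v y = d v x + 1 \<or> d v x = d v y + 1"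
    using dist_edge_cases[OF uv(1) xy(1-3)] dist_edge_cases[OF uv(2) xy(1-3)] by blast+
  moreover have "d y u = d u y" "d y v = d v y" "d x u = d u x" "d x v = d v x"
    using dist_sym xy(1,2) uv(1,2) by simp_all
  ultimately have yu: "d y u = k + 1" and yv: "d y v = k" using xv unfolding k_def by linarith+
  obtain x' where x': "x' \<in> V" "E x x'" "d x' u + 1 = k"
    using geodesic_step[OF xy(1) uv(1) \<open>x \<noteq> u\<close>] unfolding k_def .
  have "d x' v \<le> d x' u + d u v" "d x v \<le> d x x' + d x' v"
    using dist_triangle[OF x'(1) uv(1,2)] dist_triangle[OF xy(1) x'(1) uv(2)] .
  moreover have "d u v = 1" "d x x' = 1" using dist_edge x' uv xy by blast+
  ultimately have x'v: "d x' v = k" using x' xv by linarith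
  have "x' \<noteq> y" using x' yu by auto
  then have dx'y: "d x' y = 2" using dist_common_neighbours[of x x' y] x' xy by auto
  obtain m where m: "m \<in> I x' y" "m \<in> I y v" "m \<in> I x' v"
    using median_exists[OF x'(1) xy(2) uv(2)] .
  have mV: "m \<in> V" using m by (simp add: in_interval)
  have "d m y = d y m" using dist_sym mV xy by simp
  moreover have "d x' m + d m y = 2" "d y m + d m v = k" "d x' m + d m v = k"
    using m dx'y x'v yv by (simp_all add: in_interval)
  ultimately have my: "d y m = 1" and mx: "d x' m = 1" and mv: "d m v + 1 = k" by linarith+
  have "E x' m" "E y m" using edge_iff_dist_1 x' mV xy mx my by auto
  have "E m y" "E x' x" using edge_sym mV x' xy \<open>E y m\<close> by blast+
  have "d u y \<le> d u m + 1"
    using dist_triangle[of u m y] dist_edge[of m y] uv mV xy \<open>E m y\<close> by simp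
  moreover have "d u y = d y u" "d u m = d m u" using dist_sym uv mV xy by simp_all
  ultimately have "m \<notin> side u v" using mv yu by (simp add: side_def)
  moreover have "x' \<in> side u v" using x' x'v by (auto simp: side_def)
  moreover have "m \<noteq> x" using xv mv by auto
  moreover have "d x' u < d x u" using x' unfolding k_def by simp
  ultimately show ?thesis
    using that x' mV \<open>E x' m\<close> \<open>E x' x\<close> \<open>E m y\<close> \<open>x' \<noteq> y\<close> by blast
qed

lemma Djokovic_Winkler:
  assumes uv: "u \<in> V" "v \<in> V" "E u v"
    and xy: "x \<in> V" "y \<in> V" "E x y" "x \<in> side u v" "y \<notin> side u v"
  shows "side x y = side u v \<and> (elem_parallel V E)\<^sup>*\<^sup>* {u, v} {x, y}"
  using xy
proof (induction "d x u" arbitrary: x y rule: less_induct)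
  case less
  show ?case
  proof (cases "x = u")
    case True
    then have "E y u" using edge_sym less.prems uv by blast
    then have "d y u = 1" "d y u \<noteq> d y v"
      using dist_edge dist_edge_neq[of y u v] less.prems uv by auto
    then have "d y v = 0" using less.prems by (auto simp: side_def)
    then have "y = v" using dist_eq_0_iff less.prems uv by blast
    then show ?thesis using True by simp
  next
    case False
    obtain x' m where sq: "x' \<in> V" "m \<in> V" "E x' m" "E x' x" "E m y" "x' \<noteq> y" "m \<noteq> x"
      "x' \<in> side u v" "m \<notin> side u v" "d x' u < d x u"
      using crossing_edge_square[OF uv less.prems False] .
    then have IH: "side x' m = side u v" "(elem_parallel V E)\<^sup>*\<^sup>* {u, v} {x', m}"
      using less.hyps by blast+
    have "side x y = side x' m"
      using square_sides_eq[of x y x' m] less.prems sq edge_sym by metis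
    moreover have "elem_parallel V E {x', m} {x, y}"
      unfolding elem_parallel_def using sq less.prems edge_irrefl
      by (intro exI[of _ x'] exI[of _ m] exI[of _ x] exI[of _ y]) auto
    ultimately show ?thesis using IH by auto
  qed
qed

lemma crossing_edge_side:
  "\<lbrakk>u \<in> V; v \<in> V; E u v; x \<in> V; y \<in> V; E x y; x \<in> side u v; y \<notin> side u v\<rbrakk>
    \<Longrightarrow> side x y = side u v"
  using Djokovic_Winkler by blast

lemma side_convex:
  assumes uv: "u \<in> V" "v \<in> V" "E u v" and xy: "x \<in> side u v" "y \<in> side u v"
  shows "I x y \<subseteq> side u v"
proof -
  have xV: "x \<in> V" and yV: "y \<in> V" using xy side_subset by auto
  have "z \<in> side u v" if "z \<in> I x y" "d x z = n" for z n
    using that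
  proof (induction n arbitrary: z)
    case 0
    then show ?case using dist_eq_0_iff[of x z] xV xy by (auto simp: in_interval)
  next
    case (Suc n)
    have zV: "z \<in> V" using Suc.prems by (simp add: in_interval)
    obtain z' where z': "z' \<in> V" "E z z'" "d z' x + 1 = d z x"
      using geodesic_step[of z x] zV xV Suc.prems by (metis dist_self nat.distinct(1))
    have xz': "d x z' = n" using z' Suc.prems dist_sym xV zV by simp
    have "E z' z" using edge_sym z' zV by blast
    then have "d z' y \<le> d z' z + d z y" "d z' z = 1" "d x y \<le> d x z' + d z' y"
      using dist_triangle[of z' z y] dist_edge[of z' z] dist_triangle[of x z' y] z' zV xV yV
      by auto
    then have z'y: "d z' y = d z y + 1" and "z' \<in> I x y"
      using Suc.prems xz' z' by (auto simp: in_interval)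
    then have "z' \<in> side u v" using Suc.IH xz' by blast
    show ?case
    proof (rule ccontr)
      assume "z \<notin> side u v"
      then have "side z' z = side u v"
        using crossing_edge_side[of u v z' z] uv z' zV \<open>z' \<in> side u v\<close> edge_sym by blast
      then have "d y z' < d y z" using xy(2) by (auto simp: side_def)
      then show False using z'y dist_sym yV z' zV by simp
    qed
  qed
  then show "I x y \<subseteq> side u v" by blast
qed

definition sides :: "'v set set" where
  "sides = {side u v | u v. u \<in> V \<and> v \<in> V \<and> E u v}"

definition separating :: "'v \<Rightarrow> 'v \<Rightarrow> 'v set set" where
  "separating a b = {S \<in> sides. a \<notin> S \<and> b \<in> S}"

lemma sides_subset: "S \<in> sides \<Longrightarrow> S \<subseteq> V"
  using side_subset by (auto simp: sides_def)

lemma sides_compl: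
  assumes "S \<in> sides"
  shows "V - S \<in> sides"
proof -
  obtain u v where "u \<in> V" "v \<in> V" "E u v" "S = side u v"
    using assms by (auto simp: sides_def)
  moreover from this have "E v u" using edge_sym by blast
  ultimately show ?thesis using side_compl unfolding sides_def by auto
qed

lemma side_in_sides: "\<lbrakk>u \<in> V; v \<in> V; E u v\<rbrakk> \<Longrightarrow> side u v \<in> sides"
  by (auto simp: sides_def)

lemma sides_nonempty: "S \<in> sides \<Longrightarrow> S \<noteq> {}"
  using self_in_side by (auto simp: sides_def)

lemma sides_eq_side:
  assumes "S \<in> sides" "x \<in> V" "y \<in> V" "E x y" "x \<in> S" "y \<notin> S"
  shows "S = side x y"
proof -
  obtain u v where "u \<in> V" "v \<in> V" "E u v" "S = side u v"
    using assms(1) by (auto simp: sides_def)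
  then show ?thesis using crossing_edge_side[of u v x y] assms(2-) by simp
qed

lemma sides_interval:
  assumes "S \<in> sides" "x \<in> S" "y \<in> S"
  shows "I x y \<subseteq> S"
proof -
  obtain u v where "u \<in> V" "v \<in> V" "E u v" "S = side u v"
    using assms(1) by (auto simp: sides_def)
  then show ?thesis using side_convex assms(2,3) by blast
qed

lemma card_separating:
  assumes "a \<in> V" "b \<in> V"
  shows "finite (separating a b) \<and> card (separating a b) = d a b"
  using assms
proof (induction "d a b" arbitrary: a)
  case 0
  then have "separating a b = {}" using dist_eq_0_iff by (auto simp: separating_def)
  then show ?case using 0 by simp
next
  case (Suc n a)
  obtain a' where a': "a' \<in> V" "E a a'" "d a' b + 1 = d a b"
    using geodesic_step[of a b] Suc by (metis dist_self nat.distinct(1))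
  have Ea'a: "E a' a" using edge_sym a' Suc.prems by blast
  have IH: "finite (separating a' b) \<and> card (separating a' b) = n" using Suc a' by simp
  have a'I: "a' \<in> I a b" using a' dist_edge Suc.prems by (auto simp: in_interval)
  have new: "side a' a \<in> separating a b - separating a' b"
    using side_in_sides[OF a'(1) Suc.prems(1) Ea'a] self_in_side[OF a'(1) Suc.prems(1) Ea'a]
      dist_edge[OF Suc.prems(1) a'(1,2)] dist_edge[OF a'(1) Suc.prems(1) Ea'a] a'
      dist_sym Suc.prems
    by (auto simp: separating_def side_def)
  have "separating a' b \<subseteq> separating a b"
    using sides_interval a'I by (fastforce simp: separating_def)
  moreover have "S = side a' a" if "S \<in> separating a b" "a' \<in> S" for S
    using sides_eq_side[of S a' a] that a' Suc.prems Ea'a by (auto simp: separating_def)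
  then have "separating a b \<subseteq> insert (side a' a) (separating a' b)"
    by (auto simp: separating_def)
  ultimately have "separating a b = insert (side a' a) (separating a' b)" using new by blast
  then show ?case using IH new Suc.hyps by simp
qed

lemma separating_side_exists:
  assumes "a \<in> V" "b \<in> V" "a \<noteq> b"
  obtains S where "S \<in> sides" "a \<notin> S" "b \<in> S"
proof -
  have "separating a b \<noteq> {}"
    using card_separating[OF assms(1,2)] dist_eq_0_iff[OF assms(1,2)] assms(3) by fastforce
  then show ?thesis using that by (auto simp: separating_def)
qed

lemma interval_if_sides:
  assumes V: "x \<in> V" "y \<in> V" "z \<in> V"
    and h: "\<And>S. S \<in> sides \<Longrightarrow> x \<in> S \<Longrightarrow> y \<in> S \<Longrightarrow> z \<in> S"
  shows "z \<in> I x y"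
proof -
  have "separating x z \<subseteq> separating x y"
    using h[of "V - _"] sides_compl V by (fastforce simp: separating_def)
  moreover have "separating z y \<subseteq> separating x y"
    using h by (auto simp: separating_def)
  moreover have "separating x z \<inter> separating z y = {}" by (auto simp: separating_def)
  moreover have "finite (separating x y)" using card_separating V by blast
  ultimately have "card (separating x z) + card (separating z y) \<le> card (separating x y)"
    by (metis card_Un_disjoint card_mono finite_subset le_sup_iff)
  then have "d x z + d z y \<le> d x y" using card_separating V by simp
  then show ?thesis using dist_triangle V by (simp add: in_interval le_antisym)
qed

lemma convex_side: "S \<in> sides \<Longrightarrow> convex_subcomplex V E S"
  using sides_subset sides_interval by (auto simp: convex_subcomplex_def)

lemma convex_interval:
  assumes "x \<in> V" "y \<in> V"
  shows "convex_subcomplex V E (I x y)"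
  unfolding convex_subcomplex_def
proof (intro conjI ballI subsetI)
  fix a b z assume ab: "a \<in> I x y" "b \<in> I x y" and z: "z \<in> I a b"
  show "z \<in> I x y"
  proof (rule interval_if_sides)
    fix S assume "S \<in> sides" "x \<in> S" "y \<in> S"
    then have "a \<in> S" "b \<in> S" using sides_interval ab by blast+
    then show "z \<in> S" using sides_interval \<open>S \<in> sides\<close> z by blast
  qed (use assms z in \<open>auto simp: in_interval\<close>)
qed (auto simp: in_interval)

lemma helly3:
  assumes "convex_subcomplex V E A" "convex_subcomplex V E B" "convex_subcomplex V E C"
    and "a \<in> A \<inter> B" "b \<in> B \<inter> C" "c \<in> A \<inter> C"
  shows "A \<inter> B \<inter> C \<noteq> {}"
proof -
  have "a \<in> V" "b \<in> V" "c \<in> V" using assms by (auto simp: convex_subcomplex_def)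
  then obtain m where "m \<in> I a b" "m \<in> I b c" "m \<in> I a c" by (rule median_exists)
  then have "m \<in> A" "m \<in> B" "m \<in> C" using assms unfolding convex_subcomplex_def by blast+
  then show ?thesis by blast
qed

lemma helly:
  assumes "finite F" "F \<noteq> {}" "\<And>C. C \<in> F \<Longrightarrow> convex_subcomplex V E C"
    and "\<And>A B. A \<in> F \<Longrightarrow> B \<in> F \<Longrightarrow> A \<inter> B \<noteq> {}"
  shows "\<Inter>F \<noteq> {}"
  using assms
proof (induction "card F" arbitrary: F rule: less_induct)
  case less
  obtain A where A: "A \<in> F" using less.prems(2) by blast
  show ?case
  proof (cases "F = {A}")
    case True
    then show ?thesis using less.prems(4)[OF A A] by simp
  next
    case False
    text \<open>Replace the other members by their traces on \<open>A\<close>; these still meet pairwise by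
      the three-set case.\<close>
    define F' where "F' = (\<lambda>B. A \<inter> B) ` (F - {A})"
    have "F' \<noteq> {}" "finite F'" using False A less.prems(1) by (auto simp: F'_def)
    moreover have "card F' < card F"
      using card_image_le[of "F - {A}" "\<lambda>B. A \<inter> B"] card_Diff1_less[OF less.prems(1) A]
        less.prems(1) unfolding F'_def by simp
    moreover have "convex_subcomplex V E C" if "C \<in> F'" for C
      using that less.prems(3) A unfolding F'_def convex_subcomplex_def by blast
    moreover have "X \<inter> Z \<noteq> {}" if XZ: "X \<in> F'" "Z \<in> F'" for X Z
    proof -
      obtain B B' where B: "B \<in> F" "B' \<in> F" "X = A \<inter> B" "Z = A \<inter> B'"
        using XZ by (auto simp: F'_def)
      obtain a b c where "a \<in> A \<inter> B" "b \<in> B \<inter> B'" "c \<in> A \<inter> B'"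
        using less.prems(4) A B(1,2) by blast
      then have "A \<inter> B \<inter> B' \<noteq> {}" using helly3 less.prems(3) A B(1,2) by blast
      then show ?thesis using B(3,4) by blast
    qed
    ultimately have "\<Inter>F' \<noteq> {}" using less.hyps by blast
    moreover have "\<Inter>F' = \<Inter>F" using A False by (auto simp: F'_def)
    ultimately show ?thesis by simp
  qed
qed

end

section \<open>Automorphisms and invariant cubes\<close>

context median
begin

lemma interval_sym: "\<lbrakk>x \<in> V; y \<in> V\<rbrakk> \<Longrightarrow> I x y = I y x"
  using dist_sym by (auto simp: in_interval)

lemma interval_subset:
  assumes "x \<in> V" "y \<in> V" "x' \<in> I x y"
  shows "I x' y \<subseteq> I x y"
proof
  fix z assume z: "z \<in> I x' y"
  have V: "x' \<in> V" "z \<in> V" using assms z by (auto simp: in_interval)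
  have "d x z \<le> d x x' + d x' z" "d x y \<le> d x z + d z y"
    using dist_triangle assms V by blast+
  moreover have "d x x' + d x' y = d x y" "d x' z + d z y = d x' y"
    using assms z by (auto simp: in_interval)
  ultimately show "z \<in> I x y" using V by (simp add: in_interval)
qed

lemma geodesic_in_interval:
  assumes "x \<in> V" "y \<in> V"
  shows "\<exists>xs. is_path (I x y) E xs \<and> hd xs = x \<and> last xs = y \<and> length xs = Suc (d x y)"
  using assms
proof (induction "d x y" arbitrary: x)
  case 0
  then show ?case using dist_eq_0_iff by (intro exI[of _ "[x]"]) (auto simp: in_interval)
next
  case (Suc n x)
  obtain x' where x': "x' \<in> V" "E x x'" "d x' y + 1 = d x y"
    using geodesic_step[of x y] Suc by (metis dist_self nat.distinct(1))
  have x'I: "x' \<in> I x y" using x' dist_edge Suc.prems by (auto simp: in_interval)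
  obtain xs where xs: "is_path (I x' y) E xs" "hd xs = x'" "last xs = y" "length xs = Suc (d x' y)"
    using Suc.hyps(1)[of x'] Suc.hyps(2) x' Suc.prems by auto
  have "is_path (I x y) E xs"
    using xs(1) interval_subset[OF Suc.prems x'I] by (auto simp: is_path_def)
  moreover have "x \<in> I x y" using Suc.prems by (simp add: in_interval)
  ultimately have "is_path (I x y) E (x # xs)" using xs x' by (simp add: is_path_Cons)
  moreover have "last (x # xs) = y" using xs by (cases xs) (auto simp: is_path_def)
  ultimately show ?case using xs x' by (intro exI[of _ "x # xs"]) auto
qed

definition automorphism :: "('v \<Rightarrow> 'v) \<Rightarrow> bool" where
  "automorphism f \<longleftrightarrow> bij_betw f V V \<and> (\<forall>x\<in>V. \<forall>y\<in>V. E (f x) (f y) \<longleftrightarrow> E x y)"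

lemma automorphism_in: "\<lbrakk>automorphism f; x \<in> V\<rbrakk> \<Longrightarrow> f x \<in> V"
  by (auto simp: automorphism_def bij_betw_def)

lemma automorphism_edge: "\<lbrakk>automorphism f; x \<in> V; y \<in> V\<rbrakk> \<Longrightarrow> E (f x) (f y) \<longleftrightarrow> E x y"
  by (simp add: automorphism_def)

lemma automorphism_inv:
  assumes "automorphism f"
  shows "automorphism (inv_into V f)"
proof -
  have f: "bij_betw f V V" using assms by (simp add: automorphism_def)
  then have g: "bij_betw (inv_into V f) V V" by (rule bij_betw_inv_into)
  have "E a b \<longleftrightarrow> E (inv_into V f a) (inv_into V f b)" if "a \<in> V" "b \<in> V" for a b
    using assms that bij_betw_apply[OF g] f_inv_into_f[of _ f V] bij_betw_imp_surj_on[OF f]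
    unfolding automorphism_def by metis
  then show ?thesis using g by (simp add: automorphism_def)
qed

lemma automorphism_dist_le:
  assumes "automorphism f" "x \<in> V" "y \<in> V"
  shows "d (f x) (f y) \<le> d x y"
proof -
  obtain xs where xs: "is_path V E xs" "hd xs = x" "last xs = y" "length xs = Suc (d x y)"
    using geodesic assms(2,3) by blast
  have "is_path V E (map f xs)"
    by (rule is_path_map[OF xs(1)]) (use automorphism_in automorphism_edge assms(1) in auto)
  from gdist_le_length[OF this] xs show ?thesis by (cases xs) (auto simp: last_map)
qed

lemma automorphism_dist:
  assumes "automorphism f" "x \<in> V" "y \<in> V"
  shows "d (f x) (f y) = d x y"
proof -
  let ?g = "inv_into V f"
  have "?g (f x) = x" "?g (f y) = y"
    using assms by (auto simp: automorphism_def bij_betw_def)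
  then have "d x y \<le> d (f x) (f y)"
    using automorphism_dist_le[OF automorphism_inv[OF assms(1)]] automorphism_in assms by metis
  then show ?thesis using automorphism_dist_le[OF assms] by simp
qed

lemma automorphism_image_Collect:
  assumes "automorphism f" "\<And>w. w \<in> V \<Longrightarrow> P (f w) \<longleftrightarrow> Q w"
  shows "f ` {w \<in> V. Q w} = {w \<in> V. P w}"
proof -
  have "f ` V = V" using assms(1) by (simp add: automorphism_def bij_betw_def)
  then show ?thesis using assms(2) by (auto simp: image_iff) (metis imageE)
qed

lemma automorphism_interval:
  assumes "automorphism f" "x \<in> V" "y \<in> V"
  shows "f ` I x y = I (f x) (f y)"
  unfolding interval_def
  by (rule automorphism_image_Collect) (use assms automorphism_dist automorphism_in in auto)

lemma automorphism_side:
  assumes "automorphism f" "u \<in> V" "v \<in> V"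
  shows "f ` side u v = side (f u) (f v)"
  unfolding side_def
  by (rule automorphism_image_Collect) (use assms automorphism_dist in auto)

lemma automorphism_sides:
  assumes "automorphism f" "S \<in> sides"
  shows "f ` S \<in> sides"
proof -
  obtain u v where "u \<in> V" "v \<in> V" "E u v" "S = side u v"
    using assms(2) by (auto simp: sides_def)
  then show ?thesis
    using automorphism_side[OF assms(1)] automorphism_in[OF assms(1)] automorphism_edge[OF assms(1)]
    by (auto intro: side_in_sides)
qed

definition majority_side :: "'v set \<Rightarrow> 'v set \<Rightarrow> bool" where
  "majority_side A S \<longleftrightarrow> S \<in> sides \<and> card A < 2 * card (S \<inter> A)"

lemma majority_sides_meet:
  assumes "finite A" "majority_side A S" "majority_side A S'"
  shows "S \<inter> S' \<noteq> {}"
proof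
  assume "S \<inter> S' = {}"
  then have "card (S \<inter> A) + card (S' \<inter> A) = card ((S \<inter> A) \<union> (S' \<inter> A))"
    using assms(1) by (intro card_Un_disjoint[symmetric]) auto
  also have "\<dots> \<le> card A" using assms(1) by (intro card_mono) auto
  finally show False using assms(2,3) by (simp add: majority_side_def)
qed

lemma majority_centre_exists:
  assumes "finite V" "A \<subseteq> V" "A \<noteq> {}"
  obtains m where "m \<in> V" "\<And>S. majority_side A S \<Longrightarrow> m \<in> S"
proof -
  define F where "F = insert V (Collect (majority_side A))"
  have "finite sides"
    using assms(1) sides_subset by (meson Pow_iff finite_Pow_iff finite_subset subsetI)
  then have "finite F" by (auto simp: F_def majority_side_def intro: finite_subset)
  moreover have "convex_subcomplex V E C" if "C \<in> F" for C
  proof -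
    have "convex_subcomplex V E V" by (auto simp: convex_subcomplex_def in_interval)
    then show ?thesis using that convex_side by (auto simp: F_def majority_side_def)
  qed
  moreover have "S \<inter> S' \<noteq> {}" if SS': "S \<in> F" "S' \<in> F" for S S'
  proof -
    have "finite A" using assms(1,2) by (rule finite_subset[rotated])
    moreover have "S \<noteq> {}" "S \<subseteq> V" if "majority_side A S" for S
      using that sides_nonempty sides_subset by (auto simp: majority_side_def)
    moreover have "V \<noteq> {}" using assms(2,3) by blast
    ultimately show ?thesis
      using SS' majority_sides_meet unfolding F_def by (auto simp: Int_absorb1 Int_absorb2)
  qed
  ultimately have "\<Inter>F \<noteq> {}" using helly[of F] by (simp add: F_def)
  then show ?thesis using that by (auto simp: F_def)
qed

lemma majority_centre_unique:
  assumes "A \<subseteq> V" "finite A" "odd (card A)" "m \<in> V" "m' \<in> V"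
    and "\<And>S. majority_side A S \<Longrightarrow> m \<in> S" "\<And>S. majority_side A S \<Longrightarrow> m' \<in> S"
  shows "m = m'"
proof (rule ccontr)
  assume "m \<noteq> m'"
  then obtain S where S: "S \<in> sides" "m \<notin> S" "m' \<in> S"
    using separating_side_exists[OF assms(4,5)] by blast
  have "card (S \<inter> A) + card ((V - S) \<inter> A) = card ((S \<inter> A) \<union> ((V - S) \<inter> A))"
    using assms(2) by (intro card_Un_disjoint[symmetric]) auto
  also have "(S \<inter> A) \<union> ((V - S) \<inter> A) = A" using assms(1) sides_subset[OF S(1)] by blast
  finally have "majority_side A S \<or> majority_side A (V - S)"
    using assms(3) sides_compl[OF S(1)] S(1) unfolding majority_side_def by presburger
  then show False using assms(6,7) S by blast
qed

lemma majority_side_image: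
  assumes f: "automorphism f" and A: "A \<subseteq> V" "f ` A = A" and S: "majority_side A S"
  shows "majority_side A (f ` S)"
proof -
  have inj: "inj_on f V" using f by (simp add: automorphism_def bij_betw_def)
  have SV: "S \<subseteq> V" using S sides_subset by (simp add: majority_side_def)
  have "f ` S \<inter> A = f ` (S \<inter> A)"
    using inj_on_image_Int[OF inj SV A(1)] A(2) by simp
  also have "card \<dots> = card (S \<inter> A)"
    using inj SV by (intro card_image) (auto intro: inj_on_subset)
  finally show ?thesis using S automorphism_sides[OF f] by (simp add: majority_side_def)
qed

text \<open>The vertex lying in all majority sides of an invariant set of odd size is fixed.\<close>

theorem odd_invariant_set_fixed_point:
  assumes "finite V" "automorphism f" "A \<subseteq> V" "f ` A = A" "odd (card A)"
  obtains m where "m \<in> V" "f m = m"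
proof -
  have "finite A" using assms(1,3) by (rule finite_subset[rotated])
  have "A \<noteq> {}" using assms(5) by (metis card.empty even_zero)
  then obtain m where m: "m \<in> V" "\<And>S. majority_side A S \<Longrightarrow> m \<in> S"
    using majority_centre_exists assms(1,3) by blast
  let ?g = "inv_into V f"
  have bij: "bij_betw f V V" using assms(2) by (simp add: automorphism_def)
  have "?g ` A = A"
    using inv_into_image_cancel[of f V A] assms(3,4) bij by (simp add: bij_betw_def)
  have "f m \<in> S" if "majority_side A S" for S
  proof -
    have "majority_side A (?g ` S)"
      using majority_side_image[OF automorphism_inv[OF assms(2)] assms(3) \<open>?g ` A = A\<close> that] .
    then have "m \<in> ?g ` S" using m(2) by blast
    moreover have "S \<subseteq> V" using that sides_subset by (simp add: majority_side_def)
    ultimately show "f m \<in> S" using bij by (auto simp: bij_betw_def f_inv_into_f)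
  qed
  then have "f m = m"
    using majority_centre_unique[OF assms(3) \<open>finite A\<close> assms(5) automorphism_in[OF assms(2) m(1)]
        m(1)] m(2) by blast
  then show ?thesis using that m by blast
qed

lemma separating_interval_side:
  assumes "x \<in> V" "y \<in> V" "a \<in> I x y" "b \<in> I x y" "S \<in> sides" "a \<notin> S" "b \<in> S"
  shows "S \<in> separating x y \<or> V - S \<in> separating x y"
proof -
  have "\<not> (x \<in> S \<and> y \<in> S)" using sides_interval[OF assms(5)] assms(3,6) by blast
  moreover have "\<not> (x \<notin> S \<and> y \<notin> S)"
    using sides_interval[OF sides_compl[OF assms(5)]] assms(1,2,4,7) by blast
  ultimately show ?thesis using assms(1,2,5) sides_compl by (auto simp: separating_def)
qed

text \<open>The sides separating \<open>x\<close> from \<open>y\<close> embed the interval \<open>I x y\<close> isometrically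
  into a hypercube.\<close>

lemma card_separating_interval:
  assumes xy: "x \<in> V" "y \<in> V" and ab: "a \<in> I x y" "b \<in> I x y"
  shows "card {S \<in> separating x y. (a \<in> S) \<noteq> (b \<in> S)} = d a b"
proof -
  have V: "a \<in> V" "b \<in> V" using ab by (auto simp: in_interval)
  define g where "g S = (if y \<in> S then S else V - S)" for S
  have "inj_on g (separating a b)"
  proof (rule inj_onI)
    fix S S' assume "S \<in> separating a b" "S' \<in> separating a b" "g S = g S'"
    then show "S = S'" using sides_subset unfolding g_def separating_def
      by (auto split: if_splits)
  qed
  moreover have "g ` separating a b = {S \<in> separating x y. (a \<in> S) \<noteq> (b \<in> S)}"
  proof (intro equalityI subsetI)
    fix R assume "R \<in> g ` separating a b"
    then obtain S where S: "S \<in> sides" "a \<notin> S" "b \<in> S" "R = g S"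
      by (auto simp: separating_def)
    then have "S \<in> separating x y \<or> V - S \<in> separating x y"
      using separating_interval_side xy ab by blast
    then show "R \<in> {S \<in> separating x y. (a \<in> S) \<noteq> (b \<in> S)}"
      using S V by (auto simp: g_def separating_def)
  next
    fix R assume R: "R \<in> {S \<in> separating x y. (a \<in> S) \<noteq> (b \<in> S)}"
    then have R': "R \<in> sides" "y \<in> R" "x \<notin> R" by (auto simp: separating_def)
    show "R \<in> g ` separating a b"
    proof (cases "b \<in> R")
      case True
      then have "R \<in> separating a b" using R R' by (auto simp: separating_def)
      then show ?thesis using R' by (force simp: g_def)
    next
      case False
      then have "V - R \<in> separating a b" using R R' V sides_compl by (auto simp: separating_def)
      moreover have "g (V - R) = R" using R' sides_subset by (auto simp: g_def)
      ultimately show ?thesis by (metis image_eqI)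
    qed
  qed
  ultimately have "card {S \<in> separating x y. (a \<in> S) \<noteq> (b \<in> S)} = card (separating a b)"
    by (metis card_image)
  then show ?thesis using card_separating V by simp
qed

lemma interval_cube_if_realised:
  assumes xy: "x \<in> V" "y \<in> V"
    and realised: "\<And>A. A \<subseteq> separating x y \<Longrightarrow> \<exists>z\<in>I x y. {S \<in> separating x y. z \<in> S} = A"
  shows "is_cube V E (I x y)"
proof -
  let ?Sx = "separating x y"
  obtain h where h: "bij_betw h ?Sx {..<card ?Sx}"
    using ex_bij_betw_finite_nat[of ?Sx] card_separating[OF xy] by (auto simp: atLeast0LessThan)
  then have inj: "inj_on h ?Sx" by (simp add: bij_betw_def)
  define F where "F z = h ` {S \<in> ?Sx. z \<in> S}" for z
  have F_diff: "card ((F a - F b) \<union> (F b - F a)) = d a b" if "a \<in> I x y" "b \<in> I x y" for a b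
  proof -
    have "(F a - F b) \<union> (F b - F a) = h ` {S \<in> ?Sx. (a \<in> S) \<noteq> (b \<in> S)}"
      unfolding F_def using inj by (auto simp: inj_on_def)
    also have "card \<dots> = card {S \<in> ?Sx. (a \<in> S) \<noteq> (b \<in> S)}"
      using inj by (intro card_image) (auto intro: inj_on_subset)
    finally show ?thesis using card_separating_interval xy that by simp
  qed
  have "bij_betw F (I x y) (Pow {..<card ?Sx})"
  proof (rule bij_betw_imageI)
    show "inj_on F (I x y)"
      using F_diff dist_eq_0_iff by (intro inj_onI) (fastforce simp: in_interval)
    show "F ` I x y = Pow {..<card ?Sx}"
    proof (intro equalityI subsetI)
      fix B assume "B \<in> Pow {..<card ?Sx}"
      then have "B = h ` {S \<in> ?Sx. h S \<in> B}" using h by (auto simp: bij_betw_def)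
      moreover obtain z where "z \<in> I x y" "{S \<in> ?Sx. z \<in> S} = {S \<in> ?Sx. h S \<in> B}"
        using realised[of "{S \<in> ?Sx. h S \<in> B}"] by blast
      ultimately have "F z = B" "z \<in> I x y" unfolding F_def by simp_all
      then show "B \<in> F ` I x y" by blast
    qed (use h in \<open>auto simp: F_def bij_betw_def\<close>)
  qed
  moreover have "E a b \<longleftrightarrow> card ((F a - F b) \<union> (F b - F a)) = 1" if "a \<in> I x y" "b \<in> I x y" for a b
    using F_diff[OF that] edge_iff_dist_1 that by (simp add: in_interval)
  moreover have "I x y \<subseteq> V" by (auto simp: in_interval)
  ultimately show ?thesis unfolding is_cube_def by blast
qed

lemma realised_if_crossing:
  assumes xy: "x \<in> V" "y \<in> V"
    and cross: "\<And>S S'. S \<in> separating x y \<Longrightarrow> S' \<in> separating x y \<Longrightarrow> S \<noteq> S' \<Longrightarrow> \<not> S \<subseteq> S'"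
    and A: "A \<subseteq> separating x y"
  shows "\<exists>z\<in>I x y. {S \<in> separating x y. z \<in> S} = A"
proof -
  let ?Sx = "separating x y"
  text \<open>Each member of \<open>A\<close> contains \<open>y\<close> and each complement of a member of \<open>?Sx - A\<close>
    contains \<open>x\<close>; a member of \<open>A\<close> meets such a complement because the two sides cross.\<close>
  define F where "F = insert (I x y) (A \<union> (\<lambda>S. V - S) ` (?Sx - A))"
  have Sx: "S \<in> sides" "y \<in> S" "x \<notin> S" if "S \<in> ?Sx" for S
    using that by (auto simp: separating_def)
  have "finite F" using card_separating[OF xy] A by (auto simp: F_def intro: finite_subset)
  moreover have "convex_subcomplex V E C" if "C \<in> F" for C
    using that A convex_interval[OF xy] convex_side sides_compl Sx unfolding F_def by blast
  moreover have "C \<inter> C' \<noteq> {}" if "C \<in> F" "C' \<in> F" for C C'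
  proof -
    have "x \<in> I x y" "y \<in> I x y" using xy by (simp_all add: in_interval)
    then have y: "y \<in> D" if "D \<in> insert (I x y) A" for D
      using that A Sx by blast
    have x: "x \<in> D" if "D \<in> insert (I x y) ((\<lambda>S. V - S) ` (?Sx - A))" for D
      using that Sx xy \<open>x \<in> I x y\<close> by blast
    have meet: "S \<inter> D \<noteq> {}" if SD: "S \<in> A" "D \<in> (\<lambda>S. V - S) ` (?Sx - A)" for S D
    proof -
      obtain S' where "S' \<in> ?Sx - A" "D = V - S'" using SD(2) by blast
      then show ?thesis using cross[of S S'] SD(1) A sides_subset Sx by blast
    qed
    show ?thesis
      using \<open>C \<in> F\<close> \<open>C' \<in> F\<close> x y meet[of C C'] meet[of C' C] unfolding F_def
      by (metis Int_commute Un_iff disjoint_iff insert_iff)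
  qed
  ultimately have "\<Inter>F \<noteq> {}" using helly[of F] by (simp add: F_def)
  then obtain z where z: "z \<in> \<Inter>F" by blast
  then have "z \<in> I x y" "{S \<in> ?Sx. z \<in> S} = A" using A by (auto simp: F_def)
  then show ?thesis by blast
qed

text \<open>Let \<open>x\<close> minimise the displacement of an involution \<open>f\<close>. Then \<open>f\<close> maps \<open>I x (f x)\<close>
  onto itself and swaps the two sides of every wall separating \<open>x\<close> from \<open>f x\<close>;
  otherwise some point of the interval would be displaced less.\<close>

lemma involution_swaps_sides:
  assumes f: "automorphism f" "\<And>z. z \<in> V \<Longrightarrow> f (f z) = z"
    and x: "x \<in> V" "\<And>z. z \<in> V \<Longrightarrow> d x (f x) \<le> d z (f z)"
    and z: "z \<in> I x (f x)" and S: "S \<in> separating x (f x)"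
  shows "z \<in> S \<longleftrightarrow> f z \<notin> S"
proof (rule ccontr)
  let ?Sx = "separating x (f x)"
  assume swap_fails: "\<not> ?thesis"
  have fx: "f x \<in> V" using automorphism_in f x by blast
  have "f ` I x (f x) = I x (f x)"
    using automorphism_interval[OF f(1) x(1) fx] f(2)[OF x(1)] interval_sym[OF x(1) fx] by simp
  then have fz: "f z \<in> I x (f x)" using z by blast
  have "{S' \<in> ?Sx. (z \<in> S') \<noteq> (f z \<in> S')} \<subseteq> ?Sx - {S}" using swap_fails by auto
  then have "card {S' \<in> ?Sx. (z \<in> S') \<noteq> (f z \<in> S')} < card ?Sx"
    using card_separating[OF x(1) fx] S
      by (meson card_Diff1_less card_mono finite_Diff le_less_trans)
  then have "d z (f z) < d x (f x)"
    using card_separating_interval[OF x(1) fx z fz] card_separating[OF x(1) fx] by simp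
  then show False using x(2) z by (force simp: in_interval)
qed

lemma involution_sides_cross:
  assumes f: "automorphism f" "\<And>z. z \<in> V \<Longrightarrow> f (f z) = z"
    and x: "x \<in> V" "\<And>z. z \<in> V \<Longrightarrow> d x (f x) \<le> d z (f z)"
    and S: "S \<in> separating x (f x)" "S' \<in> separating x (f x)" "S \<noteq> S'"
  shows "\<not> S \<subseteq> S'"
proof
  assume sub: "S \<subseteq> S'"
  let ?J = "I x (f x)"
  have fx: "f x \<in> V" using automorphism_in f x by blast
  have swap: "z \<in> R \<longleftrightarrow> f z \<notin> R" if "z \<in> ?J" "R \<in> separating x (f x)" for z R
    using involution_swaps_sides[OF f x that] .
  have trace: "?J \<inter> S' \<subseteq> S" using swap S(1,2) sub by blast
  obtain xs where xs: "is_path ?J E xs" "hd xs = x" "last xs = f x"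
    using geodesic_in_interval[OF x(1) fx] by blast
  text \<open>A geodesic from \<open>x \<notin> S\<close> to \<open>f x \<in> S\<close> crosses \<open>S\<close> by an edge \<open>pq\<close>; since
    \<open>S \<subseteq> S'\<close>, the same edge crosses \<open>S'\<close>, so both are the side of \<open>q\<close> against \<open>p\<close>.\<close>
  have "\<exists>p q. p \<in> ?J \<and> q \<in> ?J \<and> E p q \<and> p \<notin> S \<and> q \<in> S"
  proof (rule ccontr)
    assume "\<not> ?thesis"
    then have "last xs \<notin> S"
      using is_path_invariant[OF xs(1), of "\<lambda>a. a \<notin> S"] xs(2) S(1) by (auto simp: separating_def)
    then show False using xs(3) S(1) by (simp add: separating_def)
  qed
  then obtain p q where pq: "p \<in> ?J" "q \<in> ?J" "E p q" "p \<notin> S" "q \<in> S" by blast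
  have V: "p \<in> V" "q \<in> V" using pq by (auto simp: in_interval)
  then have "E q p" using edge_sym pq(3) by blast
  moreover have "q \<in> S'" "p \<notin> S'" using pq sub trace by auto
  moreover have "S \<in> sides" "S' \<in> sides" using S by (auto simp: separating_def)
  ultimately have "S = side q p" "S' = side q p" using sides_eq_side V pq by blast+
  then show False using S(3) by simp
qed

theorem involution_stabilises_cube:
  assumes "V \<noteq> {}" "automorphism f" "\<And>z. z \<in> V \<Longrightarrow> f (f z) = z"
  obtains C where "is_cube V E C" "f ` C = C"
proof -
  obtain x where x: "x \<in> V" "\<And>z. z \<in> V \<Longrightarrow> d x (f x) \<le> d z (f z)"
    using ex_has_least_nat[of "\<lambda>z. z \<in> V" _ "\<lambda>z. d z (f z)"] assms(1) by blast
  have fx: "f x \<in> V" using automorphism_in assms(2) x by blast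
  have "is_cube V E (I x (f x))"
    using interval_cube_if_realised[OF x(1) fx] realised_if_crossing[OF x(1) fx]
      involution_sides_cross[OF assms(2,3) x] by blast
  moreover have "f ` I x (f x) = I x (f x)"
    using automorphism_interval[OF assms(2) x(1) fx] assms(3)[OF x(1)] interval_sym[OF x(1) fx]
      by simp
  ultimately show ?thesis using that by blast
qed

end

section \<open>Convex subgraphs, hyperplanes and halfspaces\<close>

context median
begin

lemma convex_subcomplex_geodesic:
  assumes Y: "convex_subcomplex V E Y" and xy: "x \<in> Y" "y \<in> Y"
  shows "\<exists>xs. is_path Y E xs \<and> hd xs = x \<and> last xs = y \<and> length xs = Suc (d x y)"
proof -
  have V: "x \<in> V" "y \<in> V" using Y xy by (auto simp: convex_subcomplex_def)
  obtain xs where xs: "is_path (I x y) E xs" "hd xs = x" "last xs = y" "length xs = Suc (d x y)"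
    using geodesic_in_interval[OF V] by blast
  moreover have "I x y \<subseteq> Y" using Y xy by (auto simp: convex_subcomplex_def)
  ultimately show ?thesis using is_path_subset by blast
qed

lemma convex_subcomplex_connected: "convex_subcomplex V E Y \<Longrightarrow> connected_graph Y E"
  using convex_subcomplex_geodesic unfolding connected_graph_def by blast

lemma convex_subcomplex_gdist:
  assumes Y: "convex_subcomplex V E Y" and xy: "x \<in> Y" "y \<in> Y"
  shows "gdist Y E x y = d x y"
proof (rule antisym)
  show "gdist Y E x y \<le> d x y"
    using convex_subcomplex_geodesic[OF assms] gdist_le_length by fastforce
  obtain ys where ys: "is_path Y E ys" "hd ys = x" "last ys = y" "length ys = Suc (gdist Y E x y)"
    using geodesic_exists[OF convex_subcomplex_connected[OF Y] xy] by blast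
  have "is_path V E ys" using ys(1) Y is_path_subset by (auto simp: convex_subcomplex_def)
  from gdist_le_length[OF this] show "d x y \<le> gdist Y E x y" using ys by simp
qed

lemma convex_subcomplex_interval:
  assumes Y: "convex_subcomplex V E Y" and xy: "x \<in> Y" "y \<in> Y"
  shows "interval Y E x y = I x y"
proof -
  have sub: "I x y \<subseteq> Y" "Y \<subseteq> V" using Y xy by (auto simp: convex_subcomplex_def)
  have "w \<in> interval Y E x y \<longleftrightarrow> w \<in> I x y" if "w \<in> Y" for w
    using convex_subcomplex_gdist[OF Y] xy that sub(2) by (auto simp: interval_def)
  moreover have "interval Y E x y \<subseteq> Y" by (auto simp: interval_def)
  ultimately show ?thesis using sub(1) by blast
qed

lemma convex_subcomplex_median:
  assumes Y: "convex_subcomplex V E Y"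
  shows "median Y E"
proof
  have YV: "Y \<subseteq> V" using Y by (simp add: convex_subcomplex_def)
  show "E y x" if "x \<in> Y" "y \<in> Y" "E x y" for x y using that YV edge_sym by blast
  show "\<not> E x x" if "x \<in> Y" for x using that YV edge_irrefl by blast
  show "connected_graph Y E" using convex_subcomplex_connected[OF Y] .
  show "\<exists>!m. m \<in> interval Y E x y \<inter> interval Y E y z \<inter> interval Y E x z"
    if "x \<in> Y" "y \<in> Y" "z \<in> Y" for x y z
    unfolding convex_subcomplex_interval[OF Y that(1,2)] convex_subcomplex_interval[OF Y that(2,3)]
      convex_subcomplex_interval[OF Y that(1,3)]
    using median_unique that YV by blast
qed

lemma finite_balls:
  assumes locfin: "\<And>w. w \<in> V \<Longrightarrow> finite {z \<in> V. E w z}" and v: "v \<in> V"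
  shows "finite {w \<in> V. d v w \<le> r}"
proof (induction r)
  case 0
  then show ?case using dist_eq_0_iff v by (auto intro: finite_subset[of _ "{v}"])
next
  case (Suc r)
  let ?B = "{w \<in> V. d v w \<le> r}"
  have "{w \<in> V. d v w \<le> Suc r} \<subseteq> ?B \<union> (\<Union>w\<in>?B. {z \<in> V. E w z})"
  proof
    fix z assume z: "z \<in> {w \<in> V. d v w \<le> Suc r}"
    show "z \<in> ?B \<union> (\<Union>w\<in>?B. {z \<in> V. E w z})"
    proof (cases "d v z \<le> r")
      case False
      then have "z \<noteq> v" using v by auto
      then obtain z' where z': "z' \<in> V" "E z z'" "d z' v + 1 = d z v"
        using geodesic_step[of z v] z v by blast
      have "E z' z" using edge_sym z' z by blast
      moreover have "d v z' = d z' v" "d v z = d z v" using dist_sym z' z v by simp_all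
      then have "z' \<in> ?B" using z' z False by simp
      ultimately show ?thesis using z by blast
    qed (use z in simp)
  qed
  moreover have "finite (\<Union>w\<in>?B. {z \<in> V. E w z})" using Suc.IH locfin by blast
  ultimately show ?case using Suc.IH by (meson finite_UnI finite_subset)
qed

definition hyperplane :: "'v \<Rightarrow> 'v \<Rightarrow> 'v set set" where
  "hyperplane u v = {e. (elem_parallel V E)\<^sup>*\<^sup>* {u, v} e}"

lemma hyperplane_sym: "hyperplane v u = hyperplane u v"
  by (simp add: hyperplane_def insert_commute)

lemma hyperplane_edge_side:
  assumes uv: "u \<in> V" "v \<in> V" "E u v" and e: "e \<in> hyperplane u v"
  shows "\<exists>x y. e = {x, y} \<and> x \<in> V \<and> y \<in> V \<and> E x y \<and> side x y = side u v"
proof -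
  have "(elem_parallel V E)\<^sup>*\<^sup>* {u, v} e" using e by (simp add: hyperplane_def)
  then show ?thesis
  proof (induction rule: rtranclp_induct)
    case base
    then show ?case using uv by blast
  next
    case (step e e')
    obtain x y where xy: "e = {x, y}" "x \<in> V" "y \<in> V" "E x y" "side x y = side u v"
      using step.IH by blast
    obtain a b c f where sq: "e = {a, b}" "e' = {c, f}" "{a, b, c, f} \<subseteq> V"
        "E a b" "E c f" "E a c" "E b f" "e \<inter> e' = {}"
      using step.hyps(2) unfolding elem_parallel_def by blast
    have V: "a \<in> V" "b \<in> V" "c \<in> V" "f \<in> V" and ne: "a \<noteq> f" "b \<noteq> c"
      using sq(3,8) sq(1,2) by auto
    have "a = x \<and> b = y \<or> a = y \<and> b = x" using sq(1) xy(1) by (auto simp: doubleton_eq_iff)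
    then show ?case
    proof
      assume "a = x \<and> b = y"
      then have "side c f = side u v" using square_sides_eq[OF V sq(4-7) ne] xy(5) by simp
      then show ?thesis using sq(2,5) V by blast
    next
      assume ab: "a = y \<and> b = x"
      have "E b a" "E f c" using edge_sym V sq(4,5) by blast+
      then have "side f c = side u v"
        using square_sides_eq[of b a f c] V sq(6,7) ne ab xy(5) by simp
      moreover have "e' = {f, c}" using sq(2) by auto
      ultimately show ?thesis using V \<open>E f c\<close> by blast
    qed
  qed
qed

lemma hyperplane_edge_iff:
  assumes uv: "u \<in> V" "v \<in> V" "E u v" and ab: "a \<in> V" "b \<in> V" "E a b"
  shows "{a, b} \<in> hyperplane u v \<longleftrightarrow> (a \<in> side u v \<longleftrightarrow> b \<notin> side u v)"
proof
  assume "{a, b} \<in> hyperplane u v"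
  then obtain x y where xy: "{a, b} = {x, y}" "x \<in> V" "y \<in> V" "E x y" "side x y = side u v"
    using hyperplane_edge_side[OF uv] by blast
  have "x \<in> side x y" "y \<notin> side x y"
    using self_in_side[OF xy(2-4)] by (auto simp: side_def)
  then show "a \<in> side u v \<longleftrightarrow> b \<notin> side u v"
    using xy(1,5) by (auto simp: doubleton_eq_iff)
next
  assume "a \<in> side u v \<longleftrightarrow> b \<notin> side u v"
  moreover have "E b a" using edge_sym ab by blast
  ultimately have "(elem_parallel V E)\<^sup>*\<^sup>* {u, v} {a, b} \<or> (elem_parallel V E)\<^sup>*\<^sup>* {u, v} {b, a}"
    using Djokovic_Winkler[OF uv] ab by blast
  then show "{a, b} \<in> hyperplane u v" by (auto simp: hyperplane_def insert_commute)
qed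

lemma halfspace_of_side:
  assumes uv: "u \<in> V" "v \<in> V" "E u v" and x: "x \<in> side u v"
  shows "{y \<in> V. \<exists>xs. is_path V (\<lambda>a b. E a b \<and> {a, b} \<notin> hyperplane u v) xs
      \<and> hd xs = x \<and> last xs = y} = side u v" (is "?C = _")
proof (intro equalityI subsetI)
  fix y assume "y \<in> ?C"
  then obtain xs where xs: "is_path V (\<lambda>a b. E a b \<and> {a, b} \<notin> hyperplane u v) xs"
    "hd xs = x" "last xs = y" by blast
  show "y \<in> side u v"
    using is_path_invariant[OF xs(1), of "\<lambda>a. a \<in> side u v"] xs(2,3) x hyperplane_edge_iff[OF uv]
    by blast
next
  fix y assume y: "y \<in> side u v"
  have V: "x \<in> V" "y \<in> V" using x y side_subset by auto
  obtain xs where xs: "is_path (I x y) E xs" "hd xs = x" "last xs = y"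
    using geodesic_in_interval[OF V] by blast
  have "I x y \<subseteq> side u v" using side_convex[OF uv x y] .
  then have "is_path V (\<lambda>a b. E a b \<and> {a, b} \<notin> hyperplane u v) (map id xs)"
    using hyperplane_edge_iff[OF uv] side_subset
    by (intro is_path_map[OF xs(1)]) (auto simp: in_interval)
  then show "y \<in> ?C" using xs V by auto
qed

lemma halfspaces_hyperplane:
  assumes uv: "u \<in> V" "v \<in> V" "E u v"
  shows "halfspaces V E (hyperplane u v) = {side u v, side v u}"
proof -
  have vu: "E v u" using edge_sym uv by blast
  define C where "C x = {y \<in> V. \<exists>xs. is_path V (\<lambda>a b. E a b \<and> {a, b} \<notin> hyperplane u v) xs
    \<and> hd xs = x \<and> last xs = y}" for x
  have "halfspaces V E (hyperplane u v) = C ` V" unfolding halfspaces_def C_def by blast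
  moreover have "C ` V = {side u v, side v u}"
  proof -
    have Cu: "C x = side u v" if "x \<in> side u v" for x
      using halfspace_of_side[OF uv that] by (simp add: C_def)
    have Cv: "C x = side v u" if "x \<in> side v u" for x
      using halfspace_of_side[OF uv(2,1) vu that] by (simp add: C_def hyperplane_sym)
    have "V = side u v \<union> side v u" using side_compl[OF uv] side_subset by blast
    moreover have "u \<in> side u v" "v \<in> side v u" using self_in_side uv vu by blast+
    ultimately show ?thesis using Cu Cv by blast
  qed
  ultimately show ?thesis by simp
qed

lemma deep_iff_infinite:
  assumes locfin: "\<And>w. w \<in> V \<Longrightarrow> finite {z \<in> V. E w z}"
    and C: "finite (carrier_vertices H)" "c \<in> carrier_vertices H" "carrier_vertices H \<subseteq> V"
    and h: "h \<subseteq> V"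
  shows "deep V E H h \<longleftrightarrow> infinite h"
proof
  assume deep: "deep V E H h"
  show "infinite h"
  proof
    assume fin: "finite h"
    define n where "n = Suc (Max (insert 0 ((\<lambda>x. d x c) ` h)))"
    obtain x where x: "x \<in> h" "n \<le> d x c"
      using deep C(2) unfolding deep_def by blast
    have "d x c \<le> Max (insert 0 ((\<lambda>x. d x c) ` h))"
      using fin x(1) by (intro Max_ge) auto
    then show False using x(2) unfolding n_def by simp
  qed
next
  assume inf: "infinite h"
  show "deep V E H h"
    unfolding deep_def
  proof
    fix n :: nat
    let ?B = "\<Union>c\<in>carrier_vertices H. {w \<in> V. d c w \<le> n}"
    have "finite ?B" using C(1,3) finite_balls[OF locfin] by blast
    then have "\<not> h \<subseteq> ?B" using inf finite_subset by blast
    then obtain x where x: "x \<in> h" "x \<notin> ?B" by blast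
    have "n \<le> d x y" if "y \<in> carrier_vertices H" for y
    proof -
      have "\<not> d y x \<le> n" using x that C(3) h by blast
      moreover have "d y x = d x y" using dist_sym that C(3) x(1) h by blast
      ultimately show ?thesis by simp
    qed
    then show "\<exists>x\<in>h. \<forall>y\<in>carrier_vertices H. n \<le> d x y" using x(1) by blast
  qed
qed

lemma hyp_diam_finite:
  assumes "finite (carrier_vertices H)"
  shows "hyp_diam V E H < \<infinity>"
proof -
  let ?C = "carrier_vertices H"
  define M where "M = Max ((\<lambda>p. d (fst p) (snd p)) ` (?C \<times> ?C))"
  have "d x y \<le> M" if "x \<in> ?C" "y \<in> ?C" for x y
    unfolding M_def using assms that by (intro Max_ge) (auto intro!: image_eqI[of _ _ "(x, y)"])
  then have "hyp_diam V E H \<le> enat M"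
    unfolding hyp_diam_def by (intro SUP_least) simp
  then show ?thesis using enat_ord_simps(4) le_less_trans by blast
qed

lemma hyp_diam_infinite:
  assumes locfin: "\<And>w. w \<in> V \<Longrightarrow> finite {z \<in> V. E w z}"
    and C: "infinite (carrier_vertices H)" "carrier_vertices H \<subseteq> V"
  shows "hyp_diam V E H = \<infinity>"
proof (rule ccontr)
  let ?C = "carrier_vertices H"
  assume "hyp_diam V E H \<noteq> \<infinity>"
  then obtain r where r: "hyp_diam V E H = enat r" by (cases "hyp_diam V E H") auto
  obtain c where c: "c \<in> ?C" using C(1) by (metis finite.emptyI ex_in_conv)
  have "enat (d c y) \<le> hyp_diam V E H" if "y \<in> ?C" for y
    unfolding hyp_diam_def using c that by (blast intro: SUP_upper2)
  then have "?C \<subseteq> {w \<in> V. d c w \<le> r}" using r C(2) by auto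
  then show False using finite_balls[OF locfin] c C by (meson finite_subset subsetD)
qed

end

section \<open>Quasilines\<close>

lemma is_cube_singleton:
  assumes "x \<in> V" "\<not> E x x"
  shows "is_cube V E {x}"
proof -
  have "bij_betw (\<lambda>_. {}) {x} (Pow {..<0::nat})" by (auto simp: bij_betw_def)
  then show ?thesis unfolding is_cube_def using assms
    by (intro conjI exI[of _ 0] exI[of _ "\<lambda>_. {}"]) auto
qed

lemma is_cube_edge:
  assumes "x \<in> V" "y \<in> V" "E x y" "E y x" "\<not> E x x" "\<not> E y y"
  shows "is_cube V E {x, y}"
proof -
  have "x \<noteq> y" using assms(3,5) by blast
  define f where "f z = (if z = x then {} else {0::nat})" for z
  have "Pow {..<1::nat} = {{}, {0}}" by (auto simp: lessThan_Suc Pow_insert)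
  then have "bij_betw f {x, y} (Pow {..<1})"
    using \<open>x \<noteq> y\<close> by (auto simp: bij_betw_def f_def inj_on_def)
  moreover have "\<forall>a\<in>{x, y}. \<forall>b\<in>{x, y}. E a b \<longleftrightarrow> card ((f a - f b) \<union> (f b - f a)) = 1"
    using assms \<open>x \<noteq> y\<close> by (auto simp: f_def)
  ultimately show ?thesis unfolding is_cube_def using assms(1,2) by blast
qed

lemma is_cube_mono: "\<lbrakk>is_cube Y E S; Y \<subseteq> V\<rbrakk> \<Longrightarrow> is_cube V E S"
  unfolding is_cube_def by blast

locale quasiline_cover =
  fixes G :: "('g, 'b) monoid_scheme" and V :: "'v set" and E :: "'v \<Rightarrow> 'v \<Rightarrow> bool"
    and act :: "'g \<Rightarrow> 'v \<Rightarrow> 'v" and Y :: "'v set" and \<phi> :: 'g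
  assumes cover: "universal_cover_of_compact_npc G V E act"
    and quasiline: "quasiline G V E act Y \<phi>"
begin

lemma group_G: "group G"
  using cover by (simp add: universal_cover_of_compact_npc_def cubical_action_def)

lemma phi: "\<phi> \<in> carrier G" "\<phi> \<noteq> \<one>\<^bsub>G\<^esub>"
  using quasiline by (auto simp: quasiline_def)

lemma Y_subset: "Y \<subseteq> V"
  using quasiline by (simp add: quasiline_def convex_subcomplex_def)

lemma median_V: "median V E"
  using cover median_graph_imp_median by (auto simp: universal_cover_of_compact_npc_def)

sublocale median Y E
  using median.convex_subcomplex_median[OF median_V] quasiline by (simp add: quasiline_def)

definition shift :: "int \<Rightarrow> 'v \<Rightarrow> 'v" where
  "shift n = act (\<phi> [^]\<^bsub>G\<^esub> n)"

lemma pow_closed: "\<phi> [^]\<^bsub>G\<^esub> (n::int) \<in> carrier G"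
  using group.int_pow_closed[OF group_G phi(1)] .

lemma shift_bij: "bij_betw (shift n) V V"
  using cover pow_closed
  by (simp add: shift_def universal_cover_of_compact_npc_def cubical_action_def)

lemma shift_edge: "\<lbrakk>x \<in> V; y \<in> V\<rbrakk> \<Longrightarrow> E (shift n x) (shift n y) \<longleftrightarrow> E x y"
  using cover pow_closed unfolding shift_def universal_cover_of_compact_npc_def cubical_action_def
  by blast

lemma shift_add: "x \<in> V \<Longrightarrow> shift (m + n) x = shift m (shift n x)"
  using cover pow_closed group.int_pow_mult[OF group_G phi(1)]
  by (simp add: shift_def universal_cover_of_compact_npc_def cubical_action_def)

lemma shift_0: "x \<in> V \<Longrightarrow> shift 0 x = x"
  using cover by (simp add: shift_def universal_cover_of_compact_npc_def cubical_action_def)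

lemma shift_image_Y: "shift n ` Y = Y"
  using quasiline by (auto simp: quasiline_def cyclic_subgroup_def shift_def)

lemma shift_in_Y: "x \<in> Y \<Longrightarrow> shift n x \<in> Y"
  using shift_image_Y by blast

lemma shift_automorphism: "automorphism (shift n)"
proof -
  have "inj_on (shift n) Y"
    using shift_bij Y_subset by (auto simp: bij_betw_def intro: inj_on_subset)
  moreover have "E (shift n x) (shift n y) \<longleftrightarrow> E x y" if "x \<in> Y" "y \<in> Y" for x y
    using shift_edge that Y_subset by blast
  ultimately show ?thesis using shift_image_Y by (simp add: automorphism_def bij_betw_def)
qed

lemma shift_stabilises_cube: "\<lbrakk>is_cube V E S; shift n ` S = S\<rbrakk> \<Longrightarrow> \<phi> [^]\<^bsub>G\<^esub> n = \<one>\<^bsub>G\<^esub>"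
  using cover pow_closed unfolding universal_cover_of_compact_npc_def free_action_def shift_def
  by blast

lemma shift_fixed_point: "\<lbrakk>x \<in> V; shift n x = x\<rbrakk> \<Longrightarrow> \<phi> [^]\<^bsub>G\<^esub> n = \<one>\<^bsub>G\<^esub>"
  using shift_stabilises_cube[of "{x}" n] is_cube_singleton[of x V E]
    median.edge_irrefl[OF median_V] by simp

lemma shift_eq_iff:
  assumes "x \<in> V"
  shows "shift m x = shift n x \<longleftrightarrow> int (group.ord G \<phi>) dvd (n - m)"
proof -
  have "shift m x = shift n x \<longleftrightarrow> \<phi> [^]\<^bsub>G\<^esub> m = \<phi> [^]\<^bsub>G\<^esub> n"
  proof
    assume "shift m x = shift n x"
    then have "shift (m - n) (shift n x) = shift n x"
      using shift_add[OF assms, of "m - n" n] by simp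
    then have "\<phi> [^]\<^bsub>G\<^esub> (m - n) = \<one>\<^bsub>G\<^esub>"
      using shift_fixed_point shift_bij assms by (meson bij_betwE)
    then show "\<phi> [^]\<^bsub>G\<^esub> m = \<phi> [^]\<^bsub>G\<^esub> n"
      using group.int_pow_eq_id[OF group_G phi(1)] group.int_pow_eq[OF group_G phi(1)] by metis
  qed (simp add: shift_def)
  then show ?thesis using group.int_pow_eq[OF group_G phi(1)] by simp
qed

lemma shift_image_0: "S \<subseteq> V \<Longrightarrow> shift 0 ` S = S"
  using shift_0 by (simp add: subset_iff)

lemma shift_image_add: "S \<subseteq> V \<Longrightarrow> shift (m + n) ` S = shift m ` shift n ` S"
  using shift_add by (auto simp: image_image subset_iff)

lemma cube_orbit_representatives:
  assumes "K \<subseteq> {S. is_cube Y E S}"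
  shows "\<exists>R\<subseteq>K. finite R \<and> (\<forall>S\<in>K. \<exists>T\<in>R. \<exists>n. S = shift n ` T)"
proof -
  define orbit where "orbit S = {act g ` S | g. g \<in> cyclic_subgroup G \<phi>}" for S
  have orbit_eq: "orbit S = range (\<lambda>n. shift n ` S)" for S
    unfolding orbit_def cyclic_subgroup_def shift_def by blast
  have "finite (orbit ` {S. is_cube Y E S})"
    using quasiline unfolding quasiline_def cocompact_on_def orbit_def
      by (simp add: setcompr_eq_image)
  then have fin: "finite (orbit ` K)" using assms by (meson finite_subset image_mono)
  define rep where "rep Q = (SOME T. T \<in> K \<and> orbit T = Q)" for Q
  have rep: "rep (orbit S) \<in> K \<and> orbit (rep (orbit S)) = orbit S" if "S \<in> K" for S
    unfolding rep_def by (rule someI_ex) (use that in blast)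
  have "\<exists>T\<in>rep ` orbit ` K. \<exists>n. S = shift n ` T" if S: "S \<in> K" for S
  proof -
    have "S \<subseteq> Y" using S assms by (auto simp: is_cube_def)
    then have "S \<subseteq> V" using Y_subset by blast
    then have "S \<in> orbit S" unfolding orbit_eq using shift_image_0 by (metis rangeI)
    then have "S \<in> range (\<lambda>n. shift n ` rep (orbit S))" using rep[OF S] by (simp add: orbit_eq)
    moreover have "rep (orbit S) \<in> rep ` orbit ` K" using S by blast
    ultimately show ?thesis by blast
  qed
  moreover have "rep ` orbit ` K \<subseteq> K" using rep by blast
  moreover have "finite (rep ` orbit ` K)" using fin by blast
  ultimately show ?thesis by blast
qed

lemma vertex_orbit_representatives:
  "\<exists>R. finite R \<and> R \<subseteq> Y \<and> (\<forall>y\<in>Y. \<exists>r\<in>R. \<exists>n. y = shift n r)"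
proof -
  let ?K = "(\<lambda>x. {x}) ` Y"
  have "is_cube Y E {x}" if "x \<in> Y" for x
    using is_cube_singleton[of x Y E] edge_irrefl that by blast
  then have "?K \<subseteq> {S. is_cube Y E S}" by blast
  then obtain R where R: "R \<subseteq> ?K" "finite R" "\<And>S. S \<in> ?K \<Longrightarrow> \<exists>T\<in>R. \<exists>n. S = shift n ` T"
    by (metis cube_orbit_representatives)
  have "\<exists>r\<in>\<Union>R. \<exists>n. y = shift n r" if y: "y \<in> Y" for y
  proof -
    obtain T n where "T \<in> R" "{y} = shift n ` T" using R(3)[of "{y}"] y by blast
    moreover obtain r where "T = {r}" using \<open>T \<in> R\<close> R(1) by blast
    ultimately show ?thesis by auto
  qed
  moreover have "finite (\<Union>R)" "\<Union>R \<subseteq> Y" using R(1,2) by auto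
  ultimately show ?thesis by blast
qed

lemma edge_is_cube:
  assumes "a \<in> Y" "b \<in> Y" "E a b"
  shows "is_cube Y E {a, b}"
proof (rule is_cube_edge)
  show "E b a" using edge_sym assms by blast
  show "\<not> E a a" "\<not> E b b" using edge_irrefl assms by blast+
qed (use assms in auto)

lemma edge_orbit_representatives:
  "\<exists>R. finite R \<and> (\<forall>e\<in>R. finite e \<and> e \<subseteq> Y) \<and>
    (\<forall>a\<in>Y. \<forall>b\<in>Y. E a b \<longrightarrow> (\<exists>e\<in>R. \<exists>n. {a, b} = shift n ` e))"
proof -
  define K where "K = {{a, b} | a b. a \<in> Y \<and> b \<in> Y \<and> E a b}"
  have "K \<subseteq> {S. is_cube Y E S}" by (auto simp: K_def edge_is_cube)
  from cube_orbit_representatives[OF this] obtain R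
    where R: "R \<subseteq> K" "finite R" "\<forall>S\<in>K. \<exists>T\<in>R. \<exists>n. S = shift n ` T" by blast
  have "\<forall>e\<in>R. finite e \<and> e \<subseteq> Y" using R(1) by (auto simp: K_def)
  moreover have "\<exists>e\<in>R. \<exists>n. {a, b} = shift n ` e" if "a \<in> Y" "b \<in> Y" "E a b" for a b
  proof -
    have "{a, b} \<in> K" using that by (auto simp: K_def)
    with R(3) show ?thesis by (rule bspec)
  qed
  ultimately show ?thesis using R(2) by (intro exI[of _ R]) simp
qed

lemma shift_eq_transfer:
  assumes "p \<in> V" "q \<in> V" "shift m p = shift n p"
  shows "shift m q = shift n q"
  using shift_eq_iff assms by blast

lemma locally_finite:
  assumes v: "v \<in> Y"
  shows "finite {w \<in> Y. E v w}"
proof -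
  obtain R where R: "finite R" "\<forall>e\<in>R. finite e \<and> e \<subseteq> Y"
    "\<forall>a\<in>Y. \<forall>b\<in>Y. E a b \<longrightarrow> (\<exists>e\<in>R. \<exists>n. {a, b} = shift n ` e)"
    using edge_orbit_representatives by blast
  define N where "N p q = {shift n q | n. shift n p = v}" for p q
  have "{w \<in> Y. E v w} \<subseteq> (\<Union>e\<in>R. \<Union>p\<in>e. \<Union>q\<in>e. N p q)"
  proof
    fix w assume "w \<in> {w \<in> Y. E v w}"
    then have "w \<in> Y" "E v w" by simp_all
    from R(3)[rule_format, OF v this] obtain e n where e: "e \<in> R" "{v, w} = shift n ` e"
      by blast
    have "v \<in> shift n ` e" "w \<in> shift n ` e" by (simp_all flip: e(2))
    then obtain p q where "p \<in> e" "q \<in> e" "shift n p = v" "shift n q = w"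
      by (metis imageE)
    then have "w \<in> N p q" unfolding N_def by blast
    then show "w \<in> (\<Union>e\<in>R. \<Union>p\<in>e. \<Union>q\<in>e. N p q)" using e(1) \<open>p \<in> e\<close> \<open>q \<in> e\<close> by blast
  qed
  moreover have fin_N: "finite (N p q)" if pq: "p \<in> Y" "q \<in> Y" for p q
  proof (cases "N p q = {}")
    case False
    text \<open>By freeness all translations carrying \<open>p\<close> to \<open>v\<close> agree on \<open>q\<close>.\<close>
    then obtain w where w: "w \<in> N p q" by blast
    have "N p q \<subseteq> {w}"
    proof
      fix w' assume "w' \<in> N p q"
      then obtain m where "w' = shift m q" "shift m p = v" by (auto simp: N_def)
      moreover obtain n where "w = shift n q" "shift n p = v" using w by (auto simp: N_def)
      ultimately show "w' \<in> {w}"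
        using shift_eq_transfer[of p q m n] pq Y_subset by auto
    qed
    then show ?thesis by (rule finite_subset) simp
  qed simp
  then have "finite (\<Union>e\<in>R. \<Union>p\<in>e. \<Union>q\<in>e. N p q)"
    by (intro finite_UN_I) (use R(1,2) fin_N in blast)+
  ultimately show ?thesis by (rule finite_subset)
qed

lemma orbit_finite_order:
  assumes "x \<in> V" "group.ord G \<phi> = N" "0 < N"
  shows "range (\<lambda>n. shift n x) = (\<lambda>n. shift n x) ` {0..<int N}"
    and "card (range (\<lambda>n. shift n x)) = N"
proof -
  have "shift n x \<in> (\<lambda>n. shift n x) ` {0..<int N}" for n
  proof (rule image_eqI)
    show "shift n x = shift (n mod int N) x"
      using shift_eq_iff[OF assms(1)] assms(2) by (simp add: mod_eq_dvd_iff[symmetric])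
    show "n mod int N \<in> {0..<int N}" using assms(3) by simp
  qed
  then show range: "range (\<lambda>n. shift n x) = (\<lambda>n. shift n x) ` {0..<int N}" by auto
  have "i = j" if "i \<in> {0..<int N}" "j \<in> {0..<int N}" "shift i x = shift j x" for i j
  proof (rule ccontr)
    assume "i \<noteq> j"
    moreover have "int N dvd (j - i)" using shift_eq_iff[OF assms(1)] assms(2) that(3) by simp
    ultimately have "\<bar>int N\<bar> \<le> \<bar>j - i\<bar>" using dvd_imp_le_int[of "j - i" "int N"] by simp
    then show False using that(1,2) by (simp add: abs_if split: if_splits)
  qed
  then have "inj_on (\<lambda>n. shift n x) {0..<int N}" by (rule inj_onI)
  then show "card (range (\<lambda>n. shift n x)) = N" unfolding range by (simp add: card_image)
qed

lemma finite_order_imp_finite_Y: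
  assumes "group.ord G \<phi> = N" "0 < N"
  shows "finite Y"
proof -
  obtain R where R: "finite R" "R \<subseteq> Y" "\<And>y. y \<in> Y \<Longrightarrow> \<exists>r\<in>R. \<exists>n. y = shift n r"
    using vertex_orbit_representatives by metis
  then have cover: "Y \<subseteq> (\<Union>r\<in>R. range (\<lambda>n. shift n r))" by (auto simp: image_iff)
  have fin_orbit: "finite (range (\<lambda>n. shift n r))" if "r \<in> R" for r
  proof -
    have "r \<in> V" using that R(2) Y_subset by blast
    then show ?thesis using orbit_finite_order(1)[OF _ assms] by simp
  qed
  have "finite (\<Union>r\<in>R. range (\<lambda>n. shift n r))" using R(1) fin_orbit by (rule finite_UN_I)
  with cover show ?thesis by (rule finite_subset)
qed

lemma shift_orbit_invariant:
  assumes "x \<in> V"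
  shows "shift 1 ` range (\<lambda>n. shift n x) = range (\<lambda>n. shift n x)"
proof (intro equalityI subsetI)
  fix y assume "y \<in> shift 1 ` range (\<lambda>n. shift n x)"
  then obtain n where "y = shift 1 (shift n x)" by blast
  then have "y = shift (1 + n) x" using shift_add[OF assms, of 1 n] by simp
  then show "y \<in> range (\<lambda>n. shift n x)" by blast
next
  fix y assume "y \<in> range (\<lambda>n. shift n x)"
  then obtain n where "y = shift n x" by blast
  then have "y = shift 1 (shift (n - 1) x)" using shift_add[OF assms, of 1 "n - 1"] by simp
  then show "y \<in> shift 1 ` range (\<lambda>n. shift n x)" by blast
qed

lemma finite_order_odd:
  assumes "Y \<noteq> {}" "group.ord G \<phi> = N" "0 < N"
  shows "odd N"
proof
  assume "even N"
  define M where "M = int N div 2"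
  have M: "0 < M" "M < int N" "M + M = int N" using assms(3) \<open>even N\<close> by (auto simp: M_def)
  have "shift M (shift M z) = z" if z: "z \<in> Y" for z
  proof -
    have zV: "z \<in> V" using z Y_subset by blast
    have "shift (int N) z = shift 0 z" using shift_eq_iff[OF zV, of "int N" 0] assms(2) by simp
    then show ?thesis using shift_add[OF zV, of M M] M(3) shift_0[OF zV] by simp
  qed
  then obtain C where C: "is_cube Y E C" "shift M ` C = C"
    by (rule involution_stabilises_cube[OF assms(1) shift_automorphism])
  have "\<phi> [^]\<^bsub>G\<^esub> M = \<one>\<^bsub>G\<^esub>" using shift_stabilises_cube[OF is_cube_mono[OF C(1) Y_subset] C(2)] .
  then have "int N dvd M" using group.int_pow_eq_id[OF group_G phi(1)] assms(2) by simp
  then show False using M(1,2) by (auto dest: zdvd_imp_le)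
qed

lemma finite_order_even:
  assumes "Y \<noteq> {}" "group.ord G \<phi> = N" "0 < N"
  shows "even N"
proof (rule ccontr)
  assume "odd N"
  obtain x where x: "x \<in> Y" using assms(1) by blast
  have xV: "x \<in> V" using x Y_subset by blast
  have "range (\<lambda>n. shift n x) \<subseteq> Y" using shift_in_Y x by blast
  moreover note shift_orbit_invariant[OF xV]
  moreover have "odd (card (range (\<lambda>n. shift n x)))"
    using orbit_finite_order[OF xV assms(2,3)] \<open>odd N\<close> by simp
  ultimately obtain m where "m \<in> Y" "shift 1 m = m"
    by (rule odd_invariant_set_fixed_point[OF finite_order_imp_finite_Y[OF assms(2,3)]
          shift_automorphism])
  then have "\<phi> [^]\<^bsub>G\<^esub> (1::int) = \<one>\<^bsub>G\<^esub>" using shift_fixed_point Y_subset by blast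
  then show False using group.int_pow_1[OF group_G phi(1)] phi(2) by simp
qed

text \<open>A finite order \<open>N\<close> of \<open>\<phi>\<close> would be odd, since otherwise the involution
  \<open>\<phi>\<^bsup>N/2\<^esup>\<close> would stabilise a cube of the finite median graph \<open>Y\<close>, and even, since
  otherwise an orbit of odd size would yield a vertex fixed by \<open>\<phi>\<close>.\<close>

theorem ord_phi_eq_0:
  assumes "Y \<noteq> {}"
  shows "group.ord G \<phi> = 0"
  using finite_order_odd[OF assms] finite_order_even[OF assms] by blast

lemma infinite_Y:
  assumes "y \<in> Y"
  shows "infinite Y"
proof
  assume "finite Y"
  have yV: "y \<in> V" using assms Y_subset by blast
  have "group.ord G \<phi> = 0" using ord_phi_eq_0 assms by blast
  then have "inj (\<lambda>n. shift n y)" using shift_eq_iff[OF yV] by (intro inj_onI) simp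
  moreover have "range (\<lambda>n. shift n y) \<subseteq> Y" using shift_in_Y assms by blast
  ultimately have "finite (UNIV :: int set)"
    using \<open>finite Y\<close> by (meson finite_imageD finite_subset)
  then show False by simp
qed

end

locale quasiline_hyperplane = quasiline_cover +
  fixes u v
  assumes u: "u \<in> Y" and v: "v \<in> Y" and uv: "E u v"
begin

abbreviation "\<H> \<equiv> hyperplane u v"

lemma edge_vu: "E v u"
  using edge_sym u v uv by blast

lemma halfspaces_eq: "halfspaces Y E \<H> = {side u v, side v u}"
  using halfspaces_hyperplane[OF u v uv] .

lemma Y_sides: "Y = side u v \<union> side v u"
  using side_compl[OF u v uv] side_subset by blast

lemma hyperplane_edge:
  assumes "e \<in> \<H>"
  obtains a b where "e = {a, b}" "a \<in> Y" "b \<in> Y" "E a b" "side a b = side u v"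
  using hyperplane_edge_side[OF u v uv assms] by blast

lemma carrier_subset: "carrier_vertices \<H> \<subseteq> Y"
  unfolding carrier_vertices_def by (auto elim: hyperplane_edge)

lemma u_in_carrier: "u \<in> carrier_vertices \<H>"
  unfolding carrier_vertices_def hyperplane_def by blast

lemma finite_carrier_classification:
  assumes "finite (carrier_vertices \<H>)"
  shows "(trivial_hyp Y E \<H> \<longleftrightarrow> hyp_diam Y E \<H> = \<infinity>)
       \<and> (half_essential Y E \<H> \<longleftrightarrow> (\<exists>h\<in>halfspaces Y E \<H>. compact_subcomplex h))
       \<and> (essential Y E \<H> \<longleftrightarrow> hyp_diam Y E \<H> < \<infinity> \<and>
                               (\<forall>h\<in>halfspaces Y E \<H>. \<not> compact_subcomplex h))"
proof -
  have "deep Y E \<H> h \<longleftrightarrow> infinite h" if "h \<in> halfspaces Y E \<H>" for h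
    using deep_iff_infinite[OF locally_finite assms u_in_carrier carrier_subset] that side_subset
    by (auto simp: halfspaces_eq)
  moreover have "\<exists>h\<in>halfspaces Y E \<H>. infinite h"
    using infinite_Y[OF u] Y_sides by (metis finite_Un halfspaces_eq insert_iff)
  moreover have "hyp_diam Y E \<H> < \<infinity>" using hyp_diam_finite[OF assms] .
  ultimately show ?thesis
    unfolding trivial_hyp_def half_essential_def essential_def compact_subcomplex_def by auto
qed

lemma shift_image_diff:
  assumes "S \<subseteq> Y"
  shows "shift n ` (Y - S) = Y - shift n ` S"
proof -
  have "inj_on (shift n) Y" using shift_automorphism by (simp add: automorphism_def bij_betw_def)
  then show ?thesis using inj_on_image_set_diff[of "shift n" Y Y S] assms shift_image_Y by simp
qed

lemma shift_side_cases:
  assumes "e \<in> \<H>" "shift k ` e \<in> \<H>"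
  shows "shift k ` side u v = side u v \<or> shift k ` side u v = side v u"
proof -
  obtain a b where ab: "e = {a, b}" "a \<in> Y" "b \<in> Y" "E a b" "side a b = side u v"
    using assms(1) by (rule hyperplane_edge)
  obtain x y where xy: "shift k ` e = {x, y}" "x \<in> Y" "y \<in> Y" "E x y" "side x y = side u v"
    using assms(2) by (rule hyperplane_edge)
  have img: "shift k ` side u v = side (shift k a) (shift k b)"
    using automorphism_side[OF shift_automorphism ab(2,3)] ab(5) by simp
  have "shift k a = x \<and> shift k b = y \<or> shift k a = y \<and> shift k b = x"
    using xy(1) ab(1) by (auto simp: doubleton_eq_iff)
  moreover have "side y x = side v u"
    using side_compl[OF xy(2,3,4)] side_compl[OF u v uv] xy(5) by simp
  ultimately show ?thesis using img xy(5) by auto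
qed

lemma stabiliser_multiples:
  assumes "S \<subseteq> Y" "shift L ` S = S"
  shows "shift (L * j) ` S = S"
proof -
  have SV: "S \<subseteq> V" using assms(1) Y_subset by blast
  have nat: "shift (M * int n) ` S = S" if "shift M ` S = S" for M n
  proof (induction n)
    case (Suc n)
    have "shift (M * int (Suc n)) ` S = shift M ` shift (M * int n) ` S"
      using shift_image_add[OF SV, of M "M * int n"] by (simp add: algebra_simps)
    then show ?case using Suc that by simp
  qed (use shift_image_0[OF SV] in simp)
  have "shift (- L) ` S = shift (- L) ` shift L ` S" using assms(2) by simp
  also have "\<dots> = S" using shift_image_add[OF SV, of "- L" L] shift_image_0[OF SV] by simp
  finally have neg: "shift (- L) ` S = S" .
  show ?thesis
  proof (cases "0 \<le> j")
    case True
    then show ?thesis using nat[OF assms(2), of "nat j"] by simp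
  next
    case False
    then show ?thesis using nat[OF neg, of "nat (- j)"] by simp
  qed
qed

lemma infinite_hyperplane:
  assumes "infinite (carrier_vertices \<H>)"
  shows "infinite \<H>"
proof
  assume "finite \<H>"
  moreover have "finite e" if "e \<in> \<H>" for e using that by (auto elim: hyperplane_edge)
  ultimately have "finite (carrier_vertices \<H>)" by (simp add: carrier_vertices_def)
  then show False using assms by simp
qed

text \<open>Cocompactness: infinitely many edges of the hyperplane fall into finitely many orbits.\<close>

lemma hyperplane_edge_orbit:
  assumes "infinite \<H>"
  obtains e k where "e \<in> \<H>" "k \<noteq> 0" "shift k ` e \<in> \<H>"
proof -
  obtain R where R: "finite R" "\<forall>e\<in>R. finite e \<and> e \<subseteq> Y"
    "\<forall>a\<in>Y. \<forall>b\<in>Y. E a b \<longrightarrow> (\<exists>e\<in>R. \<exists>n. {a, b} = shift n ` e)"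
    using edge_orbit_representatives by blast
  have "\<exists>p. fst p \<in> R \<and> e = shift (snd p) ` fst p" if eH: "e \<in> \<H>" for e
  proof -
    obtain a b where "e = {a, b}" "a \<in> Y" "b \<in> Y" "E a b" using eH by (rule hyperplane_edge)
    then show ?thesis using R(3) by fastforce
  qed
  then obtain rep where rep: "\<And>e. e \<in> \<H> \<Longrightarrow> fst (rep e) \<in> R \<and> e = shift (snd (rep e)) ` fst (rep e)"
    by metis
  define \<rho> where "\<rho> e = fst (rep e)" for e
  define \<nu> where "\<nu> e = snd (rep e)" for e
  have \<rho>: "\<rho> e \<in> R" "e = shift (\<nu> e) ` \<rho> e" if "e \<in> \<H>" for e
    using rep[OF that] by (simp_all add: \<rho>_def \<nu>_def)
  have "\<rho> ` \<H> \<subseteq> R" using \<rho> by blast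
  then have "\<not> inj_on \<rho> \<H>" using R(1) assms finite_imageD finite_subset by blast
  then obtain e1 e2 where e: "e1 \<in> \<H>" "e2 \<in> \<H>" "e1 \<noteq> e2" "\<rho> e1 = \<rho> e2"
    unfolding inj_on_def by blast
  have rV: "\<rho> e1 \<subseteq> V" using \<rho>(1)[OF e(1)] R(2) Y_subset by blast
  define k where "k = \<nu> e2 - \<nu> e1"
  have e1: "e1 = shift (\<nu> e1) ` \<rho> e1" and e2: "e2 = shift (\<nu> e2) ` \<rho> e1"
    using \<rho>(2)[OF e(1)] \<rho>(2)[OF e(2)] e(4) by simp_all
  have "shift k ` e1 = shift (k + \<nu> e1) ` \<rho> e1"
    using shift_image_add[OF rV, of k "\<nu> e1"] e1 by simp
  also have "\<dots> = e2" using e2 by (simp add: k_def)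
  finally have "shift k ` e1 = e2" .
  moreover have "k \<noteq> 0"
  proof
    assume "k = 0"
    then have "e2 = e1" using e1 e2 by (simp add: k_def)
    then show False using e(3) by simp
  qed
  ultimately show ?thesis using that e(1,2) by blast
qed

lemma side_stabiliser:
  assumes "infinite \<H>"
  obtains L where "L \<noteq> 0" "shift L ` side u v = side u v" "shift L ` side v u = side v u"
proof -
  obtain e k where e: "e \<in> \<H>" "k \<noteq> 0" "shift k ` e \<in> \<H>"
    using hyperplane_edge_orbit[OF assms] .
  have compl: "side v u = Y - side u v" using side_compl[OF u v uv] by simp
  have stable: "shift L ` side v u = side v u" if "shift L ` side u v = side u v" for L
    using shift_image_diff[OF side_subset, of L u v] that compl by simp
  text \<open>\<open>shift k\<close> either fixes or swaps the two sides, so \<open>shift (k + k)\<close> fixes both.\<close>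
  have twice: "shift (k + k) ` side u v = shift k ` shift k ` side u v"
    using shift_image_add[of "side u v" k k] side_subset Y_subset by blast
  have "shift (k + k) ` side u v = side u v"
  proof (cases "shift k ` side u v = side u v")
    case False
    then have "shift k ` side u v = side v u" using shift_side_cases[OF e(1,3)] by blast
    moreover from this have "shift k ` side v u = side u v"
      using shift_image_diff[OF side_subset, of k u v] compl Y_sides by auto
    ultimately show ?thesis using twice by simp
  qed (use twice in simp)
  moreover have "k + k \<noteq> 0" using e(2) by simp
  ultimately show ?thesis using that stable by blast
qed

lemma stabilised_subset_infinite:
  assumes "S \<subseteq> Y" "shift L ` S = S" "L \<noteq> 0" "x \<in> S"
  shows "infinite S"
proof
  assume "finite S"
  have xV: "x \<in> V" using assms(1,4) Y_subset by blast
  have "group.ord G \<phi> = 0" using ord_phi_eq_0 assms(1,4) by blast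
  then have "inj (\<lambda>j. shift (L * j) x)" using shift_eq_iff[OF xV] assms(3) by (intro inj_onI) simp
  moreover have "range (\<lambda>j. shift (L * j) x) \<subseteq> S"
    using stabiliser_multiples[OF assms(1,2)] assms(4) by blast
  ultimately have "finite (UNIV :: int set)"
    using \<open>finite S\<close> by (meson finite_imageD finite_subset)
  then show False by simp
qed

lemma carrier_stable:
  assumes "shift L ` side u v = side u v" "c \<in> carrier_vertices \<H>"
  shows "shift L c \<in> carrier_vertices \<H>"
proof -
  obtain e where e: "e \<in> \<H>" "c \<in> e" using assms(2) by (auto simp: carrier_vertices_def)
  obtain a b where ab: "e = {a, b}" "a \<in> Y" "b \<in> Y" "E a b" "side a b = side u v"
    using e(1) by (rule hyperplane_edge)
  have Y: "shift L a \<in> Y" "shift L b \<in> Y" using ab shift_in_Y by blast+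
  have E: "E (shift L a) (shift L b)"
    using ab(2-4) automorphism_edge[OF shift_automorphism] by blast
  have "side (shift L a) (shift L b) = side u v"
    using automorphism_side[OF shift_automorphism ab(2,3)] ab(5) assms(1) by simp
  moreover have "shift L a \<in> side (shift L a) (shift L b)" using self_in_side[OF Y E] .
  moreover have "shift L b \<notin> side (shift L a) (shift L b)" using Y by (simp add: side_def)
  ultimately have "shift L a \<in> side u v" "shift L b \<notin> side u v" by simp_all
  then have "{shift L a, shift L b} \<in> \<H>" using hyperplane_edge_iff[OF u v uv Y E] by blast
  then show ?thesis using e(2) ab(1) by (auto simp: carrier_vertices_def)
qed

text \<open>A nonzero power of \<open>\<phi>\<close> stabilising the hyperplane keeps every vertex at bounded distance from
  the carrier, since finitely many orbit representatives and residues modulo \<open>L\<close> suffice.\<close>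

lemma carrier_coarsely_dense:
  assumes "L \<noteq> 0" "shift L ` side u v = side u v"
  shows "\<exists>r. \<forall>y\<in>Y. \<exists>c\<in>carrier_vertices \<H>. d y c \<le> r"
proof -
  obtain R where R: "finite R" "R \<subseteq> Y" "\<forall>y\<in>Y. \<exists>x\<in>R. \<exists>n. y = shift n x"
    using vertex_orbit_representatives by blast
  define K where "K = \<bar>L\<bar>"
  have K: "0 < K" using assms(1) by (simp add: K_def)
  have stab: "shift (K * q) ` side u v = side u v" for q
  proof (cases "0 \<le> L")
    case True
    then show ?thesis using stabiliser_multiples[OF side_subset assms(2), of q] by (simp add: K_def)
  next
    case False
    then have "K * q = L * (- q)" by (simp add: K_def)
    then show ?thesis using stabiliser_multiples[OF side_subset assms(2), of "- q"] by simp
  qed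
  define bound where "bound = Max ((\<lambda>(x, s). d (shift s x) u) ` (R \<times> {0..<K}))"
  have close: "\<exists>c\<in>carrier_vertices \<H>. d y c \<le> bound" if y: "y \<in> Y" for y
  proof -
    obtain x n where x: "x \<in> R" "y = shift n x" using R(3) y by blast
    have xV: "x \<in> V" using x R(2) Y_subset by blast
    have y: "y = shift (K * (n div K)) (shift (n mod K) x)"
      using shift_add[OF xV, of "K * (n div K)" "n mod K"] x(2) by simp
    have "shift (K * (n div K)) u \<in> carrier_vertices \<H>"
      using carrier_stable[OF stab u_in_carrier] .
    moreover have "shift (n mod K) x \<in> Y" using shift_in_Y x(1) R(2) by blast
    then have "d y (shift (K * (n div K)) u) = d (shift (n mod K) x) u"
      using automorphism_dist[OF shift_automorphism _ u] y by simp
    moreover have "d (shift (n mod K) x) u \<le> bound"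
      unfolding bound_def
        using R(1) x(1) K by (intro Max_ge) (auto intro!: image_eqI[of _ _ "(x, n mod K)"])
    ultimately show ?thesis by (intro bexI[of _ "shift (K * (n div K)) u"]) simp_all
  qed
  then show ?thesis by blast
qed

lemma infinite_carrier_classification:
  assumes "infinite (carrier_vertices \<H>)"
  shows "(trivial_hyp Y E \<H> \<longleftrightarrow> hyp_diam Y E \<H> = \<infinity>)
       \<and> (half_essential Y E \<H> \<longleftrightarrow> (\<exists>h\<in>halfspaces Y E \<H>. compact_subcomplex h))
       \<and> (essential Y E \<H> \<longleftrightarrow> hyp_diam Y E \<H> < \<infinity> \<and>
                               (\<forall>h\<in>halfspaces Y E \<H>. \<not> compact_subcomplex h))"
proof -
  obtain L where L: "L \<noteq> 0" "shift L ` side u v = side u v" "shift L ` side v u = side v u"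
    using side_stabiliser[OF infinite_hyperplane[OF assms]] .
  obtain r where r: "\<forall>y\<in>Y. \<exists>c\<in>carrier_vertices \<H>. d y c \<le> r"
    using carrier_coarsely_dense[OF L(1,2)] by blast
  have "\<not> deep Y E \<H> h" if "h \<in> halfspaces Y E \<H>" for h
  proof
    assume "deep Y E \<H> h"
    then obtain y where "y \<in> h" "\<forall>c\<in>carrier_vertices \<H>. Suc r \<le> d y c" unfolding deep_def by blast
    moreover have "h \<subseteq> Y" using that side_subset by (auto simp: halfspaces_eq)
    ultimately show False using r by fastforce
  qed
  moreover have "infinite h" if "h \<in> halfspaces Y E \<H>" for h
    using that stabilised_subset_infinite[OF side_subset L(2) L(1)] self_in_side[OF u v uv]
      stabilised_subset_infinite[OF side_subset L(3) L(1)] self_in_side[OF v u edge_vu]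
    by (auto simp: halfspaces_eq)
  moreover have "hyp_diam Y E \<H> = \<infinity>"
    using hyp_diam_infinite[OF locally_finite assms carrier_subset] .
  ultimately show ?thesis
    unfolding trivial_hyp_def half_essential_def essential_def compact_subcomplex_def
    by (auto simp: halfspaces_eq)
qed

end

theorem lemma5p5:
  fixes G :: "('g, 'b) monoid_scheme"
    and V :: "'v set" and E :: "'v \<Rightarrow> 'v \<Rightarrow> bool" and act :: "'g \<Rightarrow> 'v \<Rightarrow> 'v"
    and Y :: "'v set" and \<phi> :: 'g and H :: "'v set set"
  assumes "universal_cover_of_compact_npc G V E act"
    and "quasiline G V E act Y \<phi>"
    and "H \<in> hyperplanes Y E"
  shows "(trivial_hyp Y E H \<longleftrightarrow> hyp_diam Y E H = \<infinity>)
       \<and> (half_essential Y E H \<longleftrightarrow> (\<exists>h\<in>halfspaces Y E H. compact_subcomplex h))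
       \<and> (essential Y E H \<longleftrightarrow> hyp_diam Y E H < \<infinity> \<and>
                               (\<forall>h\<in>halfspaces Y E H. \<not> compact_subcomplex h))"
proof -
  obtain u v where edge: "u \<in> Y" "v \<in> Y" "E u v"
    and H_eq: "H = {e. (elem_parallel Y E)\<^sup>*\<^sup>* {u, v} e}"
    using assms(3) unfolding hyperplanes_def edges_def by blast
  interpret quasiline_hyperplane G V E act Y \<phi> u v
    using assms(1,2) edge by unfold_locales
  have H: "H = hyperplane u v" using H_eq by (simp add: hyperplane_def)
  show ?thesis
  proof (cases "finite (carrier_vertices H)")
    case True
    then show ?thesis unfolding H by (rule finite_carrier_classification)
  next
    case False
    then show ?thesis unfolding H by (rule infinite_carrier_classification)
  qed
qed

end
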